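(* Assume model $\mathcal M_{\mathrm s}$ and $\alpha\in(0,1]$. Let $\mathbb T^A\in\mathcal T_\alpha$, $t_0\ge1$, and let $\{x_t,s_t:1\le t\le t_0\}$ be any sequence in the support of the process $\{(X_{k,t})_{k\in S^A_t},S^A_t:1\le t\le t_0\}$ generated by $\mathbb T^A$. Then there exist $\mathcal S_{\mathrm o}$-valued random variables $(\hat W,\hat W')$ on a common probability space such that $\hat W$ has the conditional law of $[(W^{G(t_0)}_{k,t_0+1})_{k\in S^{G(t_0)}_{t_0+1}}]$ given $\{(X_{k,t})_{k\in S^A_t}=x_t,\ S^A_t=s_t,\ 1\le t\le t_0\}$, $\hat W'$ has the conditional law of $[(W^{G(t_0+1)}_{k,t_0+1})_{k\in S^{G(t_0+1)}_{t_0+1}}]$ given the same event, and $\hat W\preccurlyeq\hat W'$ almost surely.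
   Context: There are $K\ge1$ data streams. Each stream $k$ has a change point $\tau_k\in\{0,1,2,\dots\}\cup\{\infty\}$. Observations $X_{k,t}$ ($1\le k\le K$, $t=1,2,\dots$) are, conditionally on $(\tau_1,\dots,\tau_K)$, independent over $k$ and $t$, with $X_{k,t}$ having density $p_{k,t}$ if $t\le\tau_k$ and $q_{k,t}$ if $t>\tau_k$ with respect to a baseline measure $\mu$. Model $\mathcal M_{\mathrm s}$: $\tau_1,\dots,\tau_K$ are i.i.d. with $\mathbb P(\tau_k=m)=\theta(1-\theta)^m$, $m=0,1,2,\dots$, for some $\theta\in(0,1)$, and $p_{k,t}=p$, $q_{k,t}=q$ for all $k,t$. A compound sequential detection procedure consists of index sets $S_1=\{1,\dots,K\}\supseteq S_2\supseteq\cdots$ and a filtration defined inductively by $\mathcal F_1=\sigma(X_{k,1}:1\le k\le K)$ and $\mathcal F_t=\sigma(\mathcal F_{t-1},S_t,X_{k,t}:k\in S_t)$ for $t>1$, where $S_t$ is required to be $\mathcal F_{t-1}$-measurable. $\mathcal T$ is the set of all such procedures. For $t\ge1$, $\mathrm{FNP}_{t+1}(\mathbb T)=\sum_{k\in S_{t+1}}\mathbf 1(\tau_k<t)/(|S_{t+1}|\vee1)$, $\mathrm{LFNR}_{t+1}(\mathbb T)=\mathbb E(\mathrm{FNP}_{t+1}(\mathbb T)\mid\mathcal F_t)$, $\mathrm{LFNR}_1(\mathbb T)=0$. $\mathcal T_\alpha=\{\mathbb T\in\mathcal T:\mathrm{LFNR}_t(\mathbb T)\le\alpha\text{ a.s.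 for all }t\ge1\}$. Posterior probabilities: $W_{k,t}=\mathbb P(\tau_k<t\mid\mathcal F_t)$. One-step update rule: given $\alpha$, $S_t$ and $(W_{k,t})_{k\in S_t}$, write $S_t=\{k_1,\dots,k_m\}$ ordered so that $W_{k_1,t}\le\cdots\le W_{k_m,t}$, ties broken so that $k_i<k_{i+1}$ when $W_{k_i,t}=W_{k_{i+1},t}$; set $R_0=0$ and $R_n=\frac1n\sum_{i=1}^nW_{k_i,t}$; let $n$ be the largest element of $\{0,\dots,m\}$ with $R_n\le\alpha$; output $S_{t+1}=\{k_1,\dots,k_n\}$ ($\emptyset$ if $n=0$). Switching procedure: for $\mathbb T^A\in\mathcal T_\alpha$ with active sets $S^A_t$ and $t_0\ge0$, $\mathbb T^{G(t_0)}$ is the procedure with $S^{G(t_0)}_t=S^A_t$ for $1\le t\le t_0$ and, for every $t\ge\max(t_0,1)$, $S^{G(t_0)}_{t+1}$ equal to the output of the one-step rule applied to $S^{G(t_0)}_t$ and its own posteriors $W^{G(t_0)}_{k,t}=\mathbb P(\tau_k<t\mid\mathcal F^{G(t_0)}_t)$. $\mathcal S_{\mathrm o}=\bigcup_{m=1}^K\{(v_1,\dots,v_m)\in[0,1]^m:v_1\le\cdots\le v_m\}\cup\{\varnothing\}$, where $\varnothing$ is the vector of length $0$; $\dim(\mathbf u)$ is the length of $\mathbf u$. Partial order: for $\mathbf u,\mathbf v\in\mathcal S_{\mathrm o}$, $\mathbf u\preccurlyeq\mathbf v$ iff $\dim(\mathbf u)\ge\dim(\mathbf v)$ and $u_i\le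 v_i$ for $i=1,\dots,\dim(\mathbf v)$ (in particular $\mathbf u\preccurlyeq\varnothing$ for all $\mathbf u$). For a finite vector $\mathbf v$, $[\mathbf v]$ is its order statistic (components sorted increasingly), $[\varnothing]=\varnothing$. *)

theory Defs
  imports "HOL-Probability.Probability"
begin

(* Under model M_s, P(tau_k = infinity) = 0, so tau_k ranges over nat. *)

definition Tau :: "nat \<Rightarrow> (nat \<Rightarrow> nat) set" where
  "Tau K = {\<tau>. \<forall>k. k \<notin> {1..K} \<longrightarrow> \<tau> k = 0}"

definition prior :: "real \<Rightarrow> nat \<Rightarrow> (nat \<Rightarrow> nat) \<Rightarrow> real" where
  "prior \<theta> K \<tau> = (\<Prod>k\<in>{1..K}. \<theta> * (1 - \<theta>) ^ (\<tau> k))"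

definition obs_dens :: "('x \<Rightarrow> real) \<Rightarrow> ('x \<Rightarrow> real) \<Rightarrow> nat \<Rightarrow> nat \<Rightarrow> 'x \<Rightarrow> real" where
  "obs_dens p q m t x = (if t \<le> m then p x else q x)"

(* An observed history up to time t is a list of length t whose (i+1)-th entry
   (index i) is (S_{i+1}, x_{i+1}), x_{i+1} k being the observed value X_{k,i+1}
   for k in S_{i+1}. *)
type_synonym 'x history = "(nat set \<times> (nat \<Rightarrow> 'x)) list"

(* density (w.r.t. the product of the baseline measure) of the observed
   history given the change points (the selection indicators of an adaptive
   procedure do not depend on tau and cancel in every conditional law) *)
definition lik :: "('x \<Rightarrow> real) \<Rightarrow> ('x \<Rightarrow> real) \<Rightarrow> 'x history \<Rightarrow> (nat \<Rightarrow> nat) \<Rightarrow> real" where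
  "lik p q h \<tau> = (\<Prod>i<length h. \<Prod>k\<in>fst (h ! i). obs_dens p q (\<tau> k) (Suc i) (snd (h ! i) k))"

definition mdens :: "real \<Rightarrow> nat \<Rightarrow> ('x \<Rightarrow> real) \<Rightarrow> ('x \<Rightarrow> real) \<Rightarrow> 'x history \<Rightarrow> real" where
  "mdens \<theta> K p q h = (\<Sum>\<^sub>\<infinity>\<tau>\<in>Tau K. prior \<theta> K \<tau> * lik p q h \<tau>)"

definition cexp :: "real \<Rightarrow> nat \<Rightarrow> ('x \<Rightarrow> real) \<Rightarrow> ('x \<Rightarrow> real) \<Rightarrow> 'x history
                     \<Rightarrow> ((nat \<Rightarrow> nat) \<Rightarrow> real) \<Rightarrow> real" where
  "cexp \<theta> K p q h f = (\<Sum>\<^sub>\<infinity>\<tau>\<in>Tau K. prior \<theta> K \<tau> * lik p q h \<tau> * f \<tau>) / mdens \<theta> K p q h"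

(* posterior probability W_{k,t} = P(tau_k < t | F_t), t = length h *)
definition Wpost :: "real \<Rightarrow> nat \<Rightarrow> ('x \<Rightarrow> real) \<Rightarrow> ('x \<Rightarrow> real) \<Rightarrow> 'x history \<Rightarrow> nat \<Rightarrow> real" where
  "Wpost \<theta> K p q h k = cexp \<theta> K p q h (\<lambda>\<tau>. if \<tau> k < length h then 1 else 0)"

definition FNP :: "nat \<Rightarrow> nat set \<Rightarrow> (nat \<Rightarrow> nat) \<Rightarrow> real" where
  "FNP t S \<tau> = (\<Sum>k\<in>S. if \<tau> k < t then 1 else 0) / real (max (card S) 1)"

(* A procedure is a map A from observed histories of length t >= 1 to S_{t+1};
   S_1 = {1..K} always. *)
definition consistent :: "nat \<Rightarrow> ('x history \<Rightarrow> nat set) \<Rightarrow> 'x history \<Rightarrow> bool" where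
  "consistent K A h \<longleftrightarrow>
     (h \<noteq> [] \<longrightarrow> fst (h ! 0) = {1..K}) \<and>
     (\<forall>i. Suc i < length h \<longrightarrow> fst (h ! Suc i) = A (take (Suc i) h))"

definition is_procedure :: "nat \<Rightarrow> ('x history \<Rightarrow> nat set) \<Rightarrow> bool" where
  "is_procedure K A \<longleftrightarrow> (\<forall>h. consistent K A h \<and> h \<noteq> [] \<longrightarrow> A h \<subseteq> fst (last h))"

(* LFNR_{t+1} = E(FNP_{t+1} | F_t) at the observed history h of length t *)
definition LFNR :: "real \<Rightarrow> nat \<Rightarrow> ('x \<Rightarrow> real) \<Rightarrow> ('x \<Rightarrow> real) \<Rightarrow> ('x history \<Rightarrow> nat set)
                     \<Rightarrow> 'x history \<Rightarrow> real" where
  "LFNR \<theta> K p q A h = cexp \<theta> K p q h (FNP (length h) (A h))"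

definition in_support :: "real \<Rightarrow> nat \<Rightarrow> 'x measure \<Rightarrow> ('x \<Rightarrow> real) \<Rightarrow> ('x \<Rightarrow> real)
                          \<Rightarrow> ('x history \<Rightarrow> nat set) \<Rightarrow> 'x history \<Rightarrow> bool" where
  "in_support \<theta> K M p q A h \<longleftrightarrow> consistent K A h \<and>
     (\<forall>i<length h. snd (h ! i) \<in> (\<Pi>\<^sub>E k\<in>fst (h ! i). space M)) \<and>
     mdens \<theta> K p q h > 0"

definition T_alpha :: "real \<Rightarrow> real \<Rightarrow> nat \<Rightarrow> 'x measure \<Rightarrow> ('x \<Rightarrow> real) \<Rightarrow> ('x \<Rightarrow> real)
                       \<Rightarrow> ('x history \<Rightarrow> nat set) \<Rightarrow> bool" where
  "T_alpha \<alpha> \<theta> K M p q A \<longleftrightarrow> is_procedure K A \<and>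
     (\<forall>h. in_support \<theta> K M p q A h \<and> length h \<ge> 1 \<longrightarrow> LFNR \<theta> K p q A h \<le> \<alpha>)"

definition order_by :: "(nat \<Rightarrow> real) \<Rightarrow> nat set \<Rightarrow> nat list" where
  "order_by W S = (THE ks. distinct ks \<and> set ks = S \<and>
      sorted_wrt (\<lambda>i j. W i < W j \<or> (W i = W j \<and> i < j)) ks)"

definition R_avg :: "(nat \<Rightarrow> real) \<Rightarrow> nat list \<Rightarrow> nat \<Rightarrow> real" where
  "R_avg W ks n = (if n = 0 then 0 else (\<Sum>i<n. W (ks ! i)) / real n)"

definition onestep :: "real \<Rightarrow> nat set \<Rightarrow> (nat \<Rightarrow> real) \<Rightarrow> nat set" where
  "onestep \<alpha> S W =
     (let ks = order_by W S;
          n = (GREATEST n. n \<le> length ks \<and> R_avg W ks n \<le> \<alpha>)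
      in set (take n ks))"

definition switch :: "real \<Rightarrow> nat \<Rightarrow> ('x \<Rightarrow> real) \<Rightarrow> ('x \<Rightarrow> real) \<Rightarrow> real
                      \<Rightarrow> ('x history \<Rightarrow> nat set) \<Rightarrow> nat \<Rightarrow> ('x history \<Rightarrow> nat set)" where
  "switch \<theta> K p q \<alpha> A t0 = (\<lambda>h. if length h < t0 then A h
                                  else onestep \<alpha> (fst (last h)) (Wpost \<theta> K p q h))"

(* measurable space of finite real vectors (lists): disjoint union of R^n *)
definition list_borel :: "real list measure" where
  "list_borel = sigma UNIV
     (range (\<lambda>n. {xs. length xs = n}) \<union>
      {{xs. i < length xs \<and> xs ! i \<in> B} | i B. B \<in> sets borel})"

(* S_o (vectors of length at most K, as all active sets are subsets of {1..K}) *)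
definition So :: "nat \<Rightarrow> real list set" where
  "So K = {v. sorted v \<and> set v \<subseteq> {0..1} \<and> length v \<le> K}"

definition Mo :: "nat \<Rightarrow> real list measure" where
  "Mo K = restrict_space list_borel (So K)"

definition preceq :: "real list \<Rightarrow> real list \<Rightarrow> bool" where
  "preceq u v \<longleftrightarrow> length u \<ge> length v \<and> (\<forall>i<length v. u ! i \<le> v ! i)"

definition pred :: "real \<Rightarrow> nat \<Rightarrow> 'x measure \<Rightarrow> ('x \<Rightarrow> real) \<Rightarrow> ('x \<Rightarrow> real)
                    \<Rightarrow> 'x history \<Rightarrow> nat set \<Rightarrow> (nat \<Rightarrow> 'x) measure" where
  "pred \<theta> K M p q h S = density (PiM S (\<lambda>_. M))
     (\<lambda>x'. ennreal (mdens \<theta> K p q (h @ [(S, x')]) / mdens \<theta> K p q h))"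

definition next_law :: "real \<Rightarrow> nat \<Rightarrow> 'x measure \<Rightarrow> ('x \<Rightarrow> real) \<Rightarrow> ('x \<Rightarrow> real)
                        \<Rightarrow> ('x history \<Rightarrow> nat set) \<Rightarrow> 'x history \<Rightarrow> real list measure" where
  "next_law \<theta> K M p q P h =
     distr (pred \<theta> K M p q h (P h)) (Mo K)
       (\<lambda>x'. sort (map (Wpost \<theta> K p q (h @ [(P h, x')])) (sorted_list_of_set (P h))))"

end

theory Submission
  imports Defs
begin

text \<open>Under the geometric prior the change points are independent a priori, and the likelihood
  of an observed history factorises over the streams, so the posterior is a product over streams.
  Consequently, given the history, the next observations are independent, stream \<open>k\<close> being drawn
  from the mixture \<open>\<pi>\<^sub>k q + (1 - \<pi>\<^sub>k) p\<close> with \<open>\<pi>\<^sub>k = W\<^sub>k + \<theta> (1 - W\<^sub>k)\<close>, and the updated posterior of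
  stream \<open>k\<close> is the Bayes update \<open>\<pi>\<^sub>k q / (\<pi>\<^sub>k q + (1 - \<pi>\<^sub>k) p)\<close> of that observation.
  The law of this update is stochastically increasing in \<open>\<pi>\<^sub>k\<close> (a Neyman--Pearson argument), so
  the quantile transform couples two streams with ordered posteriors monotonically.
  Finally, since \<open>A\<close> controls the LFNR, the average posterior over \<open>A h\<close> is at most \<open>\<alpha>\<close>, and
  the one-step rule keeps at least as many streams with smaller posteriors: pairing every stream
  of \<open>A h\<close> with a stream kept by the rule and coupling the pairs coordinatewise yields the
  dominance of the sorted posterior vectors.\<close>

section \<open>Factorisation of the posterior over streams\<close>

lemma summable_on_prod_PiE_nonneg:
  fixes f :: "'a \<Rightarrow> 'b \<Rightarrow> real"
  assumes fin: "finite A"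
    and nn: "\<And>x y. x \<in> A \<Longrightarrow> f x y \<ge> 0"
    and sm: "\<And>x. x \<in> A \<Longrightarrow> f x summable_on B x"
  shows "(\<lambda>g. \<Prod>x\<in>A. f x (g x)) summable_on PiE A B"
proof (rule nonneg_bdd_above_summable_on)
  show "\<And>g. g \<in> PiE A B \<Longrightarrow> 0 \<le> (\<Prod>x\<in>A. f x (g x))"
    using nn by (simp add: prod_nonneg)
  define s where "s x = infsum (f x) (B x)" for x
  have "(\<Sum>g\<in>P. \<Prod>x\<in>A. f x (g x)) \<le> prod s A" if P: "P \<subseteq> PiE A B" and [simp]: "finite P" for P
  proof -
    define B' where "B' x = {g x | g. g \<in> P}" for x
    have [simp]: "finite (B' x)" for x
      by (auto simp: B'_def)
    have [simp]: "finite (PiE A B')"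
      using fin by (simp add: finite_PiE)
    have [simp]: "P \<subseteq> PiE A B'"
      using P by (auto simp: B'_def)
    have s_bound: "(\<Sum>y\<in>B' x. f x y) \<le> s x" if "x \<in> A" for x
      unfolding s_def using P that sm[OF that] nn[OF that]
      by (intro finite_sum_le_infsum) (auto simp: B'_def)
    have "(\<Sum>g\<in>P. \<Prod>x\<in>A. f x (g x)) \<le> (\<Sum>g\<in>PiE A B'. \<Prod>x\<in>A. f x (g x))"
      by (rule sum_mono2) (auto simp: prod_nonneg nn)
    also have "\<dots> = (\<Prod>x\<in>A. \<Sum>y\<in>B' x. f x y)"
      by (rule prod_sum_PiE[symmetric]) (use fin in auto)
    also have "\<dots> \<le> prod s A"
      using s_bound nn by (intro prod_mono) (auto simp: sum_nonneg)
    finally show ?thesis .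
  qed
  then show "bdd_above (sum (\<lambda>g. \<Prod>x\<in>A. f x (g x)) ` {F. F \<subseteq> PiE A B \<and> finite F})"
    by (intro bdd_aboveI) blast
qed

definition zero_extend :: "nat \<Rightarrow> (nat \<Rightarrow> nat) \<Rightarrow> nat \<Rightarrow> nat" where
  "zero_extend K g = (\<lambda>k. if k \<in> {1..K} then g k else 0)"

lemma bij_betw_zero_extend_Tau: "bij_betw (zero_extend K) (PiE {1..K} (\<lambda>_. UNIV)) (Tau K)"
  by (rule bij_betw_byWitness[where f'="\<lambda>\<tau>. restrict \<tau> {1..K}"])
    (auto simp: zero_extend_def Tau_def PiE_def extensional_def fun_eq_iff)

lemma
  fixes \<phi> :: "nat \<Rightarrow> nat \<Rightarrow> real"
  assumes nn: "\<And>k m. k \<in> {1..K} \<Longrightarrow> \<phi> k m \<ge> 0"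
    and sm: "\<And>k. k \<in> {1..K} \<Longrightarrow> \<phi> k summable_on UNIV"
  shows summable_on_Tau_prod: "(\<lambda>\<tau>. \<Prod>k\<in>{1..K}. \<phi> k (\<tau> k)) summable_on Tau K"
    and infsum_Tau_prod: "(\<Sum>\<^sub>\<infinity>\<tau>\<in>Tau K. \<Prod>k\<in>{1..K}. \<phi> k (\<tau> k)) = (\<Prod>k\<in>{1..K}. \<Sum>\<^sub>\<infinity>m. \<phi> k m)"
proof -
  let ?F = "\<lambda>\<tau>. \<Prod>k\<in>{1..K}. \<phi> k (\<tau> k)"
  have ext: "?F (zero_extend K g) = ?F g" for g
    by (rule prod.cong) (auto simp: zero_extend_def)
  have "?F summable_on PiE {1..K} (\<lambda>_. UNIV)"
    by (rule summable_on_prod_PiE_nonneg) (use nn sm in auto)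
  then show "?F summable_on Tau K"
    using summable_on_reindex_bij_betw[OF bij_betw_zero_extend_Tau[of K], of ?F] unfolding ext by simp
  have abs: "(\<lambda>m. norm (\<phi> k m)) summable_on UNIV" if "k \<in> {1..K}" for k
    using nn[OF that] sm[OF that] by (simp add: abs_of_nonneg)
  have "(\<Sum>\<^sub>\<infinity>\<tau>\<in>Tau K. ?F \<tau>) = (\<Sum>\<^sub>\<infinity>g\<in>PiE {1..K} (\<lambda>_. UNIV). ?F g)"
    using infsum_reindex_bij_betw[OF bij_betw_zero_extend_Tau[of K], of ?F] unfolding ext by simp
  also have "\<dots> = (\<Prod>k\<in>{1..K}. \<Sum>\<^sub>\<infinity>m. \<phi> k m)"
    by (rule infsum_prod_PiE_abs) (use abs in auto)
  finally show "(\<Sum>\<^sub>\<infinity>\<tau>\<in>Tau K. ?F \<tau>) = (\<Prod>k\<in>{1..K}. \<Sum>\<^sub>\<infinity>m. \<phi> k m)" .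
qed

lemma
  fixes f :: "'i \<Rightarrow> 'a \<Rightarrow> real"
  assumes "finite I" "\<And>i. i \<in> I \<Longrightarrow> f i summable_on A"
  shows infsum_sum: "infsum (\<lambda>x. \<Sum>i\<in>I. f i x) A = (\<Sum>i\<in>I. infsum (f i) A)"
    and summable_on_sum: "(\<lambda>x. \<Sum>i\<in>I. f i x) summable_on A"
  using assms
proof (induction I rule: finite_induct)
  case (insert i I)
  { case 1 then show ?case using insert by (simp add: infsum_add summable_on_add) }
  { case 2 then show ?case using insert by (simp add: summable_on_add) }
qed auto

definition geom_weight :: "real \<Rightarrow> nat \<Rightarrow> real" where
  "geom_weight \<theta> m = \<theta> * (1 - \<theta>) ^ m"

definition stream_lik :: "('x \<Rightarrow> real) \<Rightarrow> ('x \<Rightarrow> real) \<Rightarrow> 'x history \<Rightarrow> nat \<Rightarrow> nat \<Rightarrow> real" where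
  "stream_lik p q h k m =
     (\<Prod>i<length h. if k \<in> fst (h ! i) then obs_dens p q m (Suc i) (snd (h ! i) k) else 1)"

definition history_within :: "nat \<Rightarrow> 'x history \<Rightarrow> bool" where
  "history_within K h \<longleftrightarrow> (\<forall>i<length h. fst (h ! i) \<subseteq> {1..K})"

definition history_nonneg :: "('x \<Rightarrow> real) \<Rightarrow> ('x \<Rightarrow> real) \<Rightarrow> 'x history \<Rightarrow> bool" where
  "history_nonneg p q h \<longleftrightarrow>
     (\<forall>i<length h. \<forall>k\<in>fst (h ! i). p (snd (h ! i) k) \<ge> 0 \<and> q (snd (h ! i) k) \<ge> 0)"

lemma lik_eq_prod_stream_lik:
  assumes "history_within K h"
  shows "lik p q h \<tau> = (\<Prod>k\<in>{1..K}. stream_lik p q h k (\<tau> k))"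
proof -
  have "lik p q h \<tau> = (\<Prod>i<length h. \<Prod>k\<in>{1..K}.
      if k \<in> fst (h ! i) then obs_dens p q (\<tau> k) (Suc i) (snd (h ! i) k) else 1)"
    unfolding lik_def
  proof (rule prod.cong[OF refl])
    fix i assume "i \<in> {..<length h}"
    then have "fst (h ! i) \<subseteq> {1..K}" using assms by (auto simp: history_within_def)
    then show "(\<Prod>k\<in>fst (h ! i). obs_dens p q (\<tau> k) (Suc i) (snd (h ! i) k)) = (\<Prod>k\<in>{1..K}.
        if k \<in> fst (h ! i) then obs_dens p q (\<tau> k) (Suc i) (snd (h ! i) k) else 1)"
      by (simp add: prod.inter_restrict[symmetric] Int_absorb1)
  qed
  also have "\<dots> = (\<Prod>k\<in>{1..K}. stream_lik p q h k (\<tau> k))"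
    unfolding stream_lik_def by (rule prod.swap)
  finally show ?thesis .
qed

lemma stream_lik_nonneg: "history_nonneg p q h \<Longrightarrow> stream_lik p q h k m \<ge> 0"
  unfolding stream_lik_def history_nonneg_def obs_dens_def by (auto intro!: prod_nonneg)

lemma stream_lik_min: "stream_lik p q h k m = stream_lik p q h k (min m (length h))"
  unfolding stream_lik_def obs_dens_def by (intro prod.cong) auto

lemma stream_lik_bounded: "\<exists>B. \<forall>m. stream_lik p q h k m \<le> B"
proof -
  have "stream_lik p q h k m \<le> Max (stream_lik p q h k ` {..length h})" for m
    by (subst stream_lik_min) (auto intro!: Max_ge)
  then show ?thesis by blast
qed

lemma stream_lik_snoc:
  "stream_lik p q (h @ [(S, x')]) k m =
     stream_lik p q h k m * (if k \<in> S then obs_dens p q m (Suc (length h)) (x' k) else 1)"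
proof -
  have "(\<Prod>i<length h. if k \<in> fst ((h @ [(S, x')]) ! i)
          then obs_dens p q m (Suc i) (snd ((h @ [(S, x')]) ! i) k) else 1) = stream_lik p q h k m"
    unfolding stream_lik_def by (intro prod.cong) (auto simp: nth_append)
  then show ?thesis unfolding stream_lik_def by simp
qed

lemma history_within_snoc:
  "history_within K h \<Longrightarrow> S \<subseteq> {1..K} \<Longrightarrow> history_within K (h @ [(S, x')])"
  unfolding history_within_def by (auto simp: nth_append less_Suc_eq)

lemma history_nonneg_snoc:
  "history_nonneg p q h \<Longrightarrow> \<forall>k\<in>S. p (x' k) \<ge> 0 \<and> q (x' k) \<ge> 0 \<Longrightarrow> history_nonneg p q (h @ [(S, x')])"
  unfolding history_nonneg_def by (auto simp: nth_append less_Suc_eq)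

text \<open>With \<open>t = length h\<close>: the evidence of stream \<open>k\<close> and its parts coming from
  \<open>\<tau>\<^sub>k < t\<close> (changed by time \<open>t\<close>) and from \<open>\<tau>\<^sub>k \<le> t\<close> (changed by time \<open>t + 1\<close>).\<close>

definition evidence :: "real \<Rightarrow> ('x \<Rightarrow> real) \<Rightarrow> ('x \<Rightarrow> real) \<Rightarrow> 'x history \<Rightarrow> nat \<Rightarrow> real" where
  "evidence \<theta> p q h k = (\<Sum>\<^sub>\<infinity>m. geom_weight \<theta> m * stream_lik p q h k m)"

definition evidence_changed :: "real \<Rightarrow> ('x \<Rightarrow> real) \<Rightarrow> ('x \<Rightarrow> real) \<Rightarrow> 'x history \<Rightarrow> nat \<Rightarrow> real" where
  "evidence_changed \<theta> p q h k =
     (\<Sum>\<^sub>\<infinity>m. geom_weight \<theta> m * stream_lik p q h k m * (if m < length h then 1 else 0))"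

definition evidence_changed_next :: "real \<Rightarrow> ('x \<Rightarrow> real) \<Rightarrow> ('x \<Rightarrow> real) \<Rightarrow> 'x history \<Rightarrow> nat \<Rightarrow> real" where
  "evidence_changed_next \<theta> p q h k =
     (\<Sum>\<^sub>\<infinity>m. geom_weight \<theta> m * stream_lik p q h k m * (if m \<le> length h then 1 else 0))"

definition pred_change :: "real \<Rightarrow> ('x \<Rightarrow> real) \<Rightarrow> ('x \<Rightarrow> real) \<Rightarrow> 'x history \<Rightarrow> nat \<Rightarrow> real" where
  "pred_change \<theta> p q h k = evidence_changed_next \<theta> p q h k / evidence \<theta> p q h k"

definition mix_dens :: "('x \<Rightarrow> real) \<Rightarrow> ('x \<Rightarrow> real) \<Rightarrow> real \<Rightarrow> 'x \<Rightarrow> real" where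
  "mix_dens p q \<pi> x = \<pi> * q x + (1 - \<pi>) * p x"

definition post_change :: "('x \<Rightarrow> real) \<Rightarrow> ('x \<Rightarrow> real) \<Rightarrow> real \<Rightarrow> 'x \<Rightarrow> real" where
  "post_change p q \<pi> x = \<pi> * q x / mix_dens p q \<pi> x"

lemma indicator_as_prod:
  fixes \<tau> :: "nat \<Rightarrow> nat"
  shows "k0 \<in> {1..K} \<Longrightarrow> (if \<tau> k0 < t then 1 else 0 :: real)
     = (\<Prod>k\<in>{1..K}. if k = k0 then (if \<tau> k < t then 1 else 0) else 1)"
  by (subst prod.delta) auto

lemma infsum_at_single: "(\<Sum>\<^sub>\<infinity>m::nat. if m = t then c else (0::real)) = c"
  by (subst infsum_cong_neutral[where T = "{t}"]) auto

locale geometric_prior =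
  fixes \<theta> :: real
  assumes \<theta>_pos: "0 < \<theta>" and \<theta>_less_1: "\<theta> < 1"
begin

lemma geom_weight_nonneg: "geom_weight \<theta> m \<ge> 0"
  using \<theta>_pos \<theta>_less_1 by (simp add: geom_weight_def)

lemma has_sum_geom_weight: "(geom_weight \<theta> has_sum 1) UNIV"
proof -
  have "(\<lambda>n. \<theta> * (1 - \<theta>) ^ n) sums (\<theta> * (1 / (1 - (1 - \<theta>))))"
    using \<theta>_pos \<theta>_less_1 by (intro sums_mult geometric_sums) auto
  then have "geom_weight \<theta> sums 1"
    using \<theta>_pos by (simp add: geom_weight_def[abs_def])
  then show ?thesis
    by (rule sums_nonneg_imp_has_sum) (rule geom_weight_nonneg)
qed

lemma infsum_geom_weight_tail:
  "(\<Sum>\<^sub>\<infinity>m. geom_weight \<theta> m * (if t \<le> m then 1 else 0)) = (1 - \<theta>) ^ t"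
proof -
  let ?g = "\<lambda>m. geom_weight \<theta> m * (if t \<le> m then 1 else 0)"
  have "(\<lambda>i. ?g (i + t)) = (\<lambda>i. (1 - \<theta>) ^ t * geom_weight \<theta> i)"
    by (auto simp: geom_weight_def fun_eq_iff power_add)
  moreover have "(\<lambda>i. (1 - \<theta>) ^ t * geom_weight \<theta> i) sums ((1 - \<theta>) ^ t * 1)"
    using has_sum_geom_weight by (intro sums_mult has_sum_imp_sums)
  ultimately have "?g sums ((1 - \<theta>) ^ t + (\<Sum>i<t. ?g i))"
    by (intro sums_iff_shift[THEN iffD1]) simp
  then have "(?g has_sum (1 - \<theta>) ^ t) UNIV"
    by (intro sums_nonneg_imp_has_sum) (simp_all add: geom_weight_nonneg)
  then show ?thesis by (simp add: has_sum_iff)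
qed

lemma summable_on_weighted_stream_lik:
  assumes "history_nonneg p q h" "\<And>m. 0 \<le> c m" "\<And>m. c m \<le> 1"
  shows "(\<lambda>m. geom_weight \<theta> m * stream_lik p q h k m * c m) summable_on UNIV"
proof -
  obtain B where B: "\<And>m. stream_lik p q h k m \<le> B" using stream_lik_bounded by blast
  show ?thesis
  proof (rule summable_on_comparison_test)
  show "(\<lambda>m. B * geom_weight \<theta> m) summable_on UNIV"
    using has_sum_geom_weight by (intro summable_on_cmult_right) (auto simp: has_sum_iff)
  have lk: "0 \<le> stream_lik p q h k m" "stream_lik p q h k m * c m \<le> B" for m
    using B[of m] assms stream_lik_nonneg[OF assms(1)] mult_left_le[of "c m" "stream_lik p q h k m"]
    by auto
  show "geom_weight \<theta> m * stream_lik p q h k m * c m \<le> B * geom_weight \<theta> m" for m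
    using lk[of m] geom_weight_nonneg[of m] by (simp add: mult.assoc mult.commute[of B] mult_left_mono)
  show "0 \<le> geom_weight \<theta> m * stream_lik p q h k m * c m" for m
    using lk[of m] assms(2)[of m] geom_weight_nonneg[of m] by simp
  qed
qed

lemma summable_on_stream_lik_indicator:
  "history_nonneg p q h \<Longrightarrow>
     (\<lambda>m. geom_weight \<theta> m * stream_lik p q h k m * (if P m then 1 else 0)) summable_on UNIV"
  by (rule summable_on_weighted_stream_lik) auto

lemma prior_lik_factor:
  assumes "history_within K h" "history_nonneg p q h" "\<And>k m. 0 \<le> c k m" "\<And>k m. c k m \<le> 1"
  shows "(\<lambda>\<tau>. prior \<theta> K \<tau> * lik p q h \<tau> * (\<Prod>k\<in>{1..K}. c k (\<tau> k))) summable_on Tau K"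
    and "(\<Sum>\<^sub>\<infinity>\<tau>\<in>Tau K. prior \<theta> K \<tau> * lik p q h \<tau> * (\<Prod>k\<in>{1..K}. c k (\<tau> k)))
         = (\<Prod>k\<in>{1..K}. \<Sum>\<^sub>\<infinity>m. geom_weight \<theta> m * stream_lik p q h k m * c k m)"
proof -
  have eq: "prior \<theta> K \<tau> * lik p q h \<tau> * (\<Prod>k\<in>{1..K}. c k (\<tau> k))
      = (\<Prod>k\<in>{1..K}. geom_weight \<theta> (\<tau> k) * stream_lik p q h k (\<tau> k) * c k (\<tau> k))" for \<tau>
    unfolding prior_def lik_eq_prod_stream_lik[OF assms(1)] geom_weight_def by (simp add: prod.distrib)
  have nn: "0 \<le> geom_weight \<theta> m * stream_lik p q h k m * c k m" for k m
    using assms(2,3) by (simp add: geom_weight_nonneg stream_lik_nonneg)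
  note sm = summable_on_weighted_stream_lik[OF assms(2-4)]
  show "(\<lambda>\<tau>. prior \<theta> K \<tau> * lik p q h \<tau> * (\<Prod>k\<in>{1..K}. c k (\<tau> k))) summable_on Tau K"
    unfolding eq by (rule summable_on_Tau_prod[OF nn sm])
  show "(\<Sum>\<^sub>\<infinity>\<tau>\<in>Tau K. prior \<theta> K \<tau> * lik p q h \<tau> * (\<Prod>k\<in>{1..K}. c k (\<tau> k)))
         = (\<Prod>k\<in>{1..K}. \<Sum>\<^sub>\<infinity>m. geom_weight \<theta> m * stream_lik p q h k m * c k m)"
    unfolding eq by (rule infsum_Tau_prod[OF nn sm])
qed

lemma mdens_eq_prod_evidence:
  assumes "history_within K h" "history_nonneg p q h"
  shows "mdens \<theta> K p q h = (\<Prod>k\<in>{1..K}. evidence \<theta> p q h k)"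
  using prior_lik_factor(2)[OF assms, of "\<lambda>_ _. 1"] unfolding mdens_def evidence_def by simp

lemma summable_on_prior_lik_indicator:
  assumes "history_within K h" "history_nonneg p q h" "k0 \<in> {1..K}"
  shows "(\<lambda>\<tau>. prior \<theta> K \<tau> * lik p q h \<tau> * (if \<tau> k0 < t then 1 else 0)) summable_on Tau K"
  using prior_lik_factor(1)[OF assms(1,2), of "\<lambda>k m. if k = k0 then (if m < t then 1 else 0) else 1"]
  unfolding indicator_as_prod[OF assms(3), of _ t] by simp

lemma evidence_nonneg: "history_nonneg p q h \<Longrightarrow> evidence \<theta> p q h k \<ge> 0"
  unfolding evidence_def by (intro infsum_nonneg mult_nonneg_nonneg stream_lik_nonneg geom_weight_nonneg)

lemma evidence_pos:
  assumes "history_within K h" "history_nonneg p q h" "mdens \<theta> K p q h \<noteq> 0" "k \<in> {1..K}"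
  shows "evidence \<theta> p q h k > 0"
  using assms mdens_eq_prod_evidence[OF assms(1,2)] evidence_nonneg[OF assms(2), of k]
  by (auto simp: order_less_le)

lemma Wpost_eq_evidence_ratio:
  assumes "history_within K h" "history_nonneg p q h" "k0 \<in> {1..K}" "mdens \<theta> K p q h \<noteq> 0"
  shows "Wpost \<theta> K p q h k0 = evidence_changed \<theta> p q h k0 / evidence \<theta> p q h k0"
proof -
  let ?c = "\<lambda>k m. if k = k0 then (if m < length h then 1 else 0) else (1::real)"
  let ?rest = "\<Prod>k\<in>{1..K}-{k0}. evidence \<theta> p q h k"
  have "(\<Sum>\<^sub>\<infinity>\<tau>\<in>Tau K. prior \<theta> K \<tau> * lik p q h \<tau> * (if \<tau> k0 < length h then 1 else 0))
      = (\<Prod>k\<in>{1..K}. \<Sum>\<^sub>\<infinity>m. geom_weight \<theta> m * stream_lik p q h k m * ?c k m)"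
    using prior_lik_factor(2)[OF assms(1,2), of ?c]
    unfolding indicator_as_prod[OF assms(3), of _ "length h"] by simp
  also have "\<dots> = evidence_changed \<theta> p q h k0 * ?rest"
    using assms(3) by (subst prod.remove[OF finite_atLeastAtMost, of k0])
      (auto simp: evidence_changed_def evidence_def intro!: prod.cong)
  finally have num: "(\<Sum>\<^sub>\<infinity>\<tau>\<in>Tau K. prior \<theta> K \<tau> * lik p q h \<tau> * (if \<tau> k0 < length h then 1 else 0))
      = evidence_changed \<theta> p q h k0 * ?rest" .
  have den: "mdens \<theta> K p q h = evidence \<theta> p q h k0 * ?rest"
    using mdens_eq_prod_evidence[OF assms(1,2)] assms(3) by (simp add: prod.remove[OF finite_atLeastAtMost])
  then have "?rest \<noteq> 0" using assms(4) by auto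
  then show ?thesis
    unfolding Wpost_def cexp_def num den by simp
qed

lemma evidence_changed_bounds:
  assumes "history_nonneg p q h"
  shows "0 \<le> evidence_changed \<theta> p q h k" "evidence_changed \<theta> p q h k \<le> evidence \<theta> p q h k"
proof -
  have nn: "0 \<le> geom_weight \<theta> m * stream_lik p q h k m" for m
    by (intro mult_nonneg_nonneg stream_lik_nonneg geom_weight_nonneg assms)
  show "0 \<le> evidence_changed \<theta> p q h k"
    unfolding evidence_changed_def using nn by (intro infsum_nonneg) simp
  show "evidence_changed \<theta> p q h k \<le> evidence \<theta> p q h k"
    unfolding evidence_changed_def evidence_def using nn
    by (intro infsum_mono summable_on_stream_lik_indicator[OF assms]
        summable_on_weighted_stream_lik[OF assms, of "\<lambda>_. 1", simplified]) auto
qed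

lemma Wpost_bounds:
  assumes "history_within K h" "history_nonneg p q h" "mdens \<theta> K p q h \<noteq> 0" "k \<in> {1..K}"
  shows "0 \<le> Wpost \<theta> K p q h k" "Wpost \<theta> K p q h k \<le> 1"
  using evidence_pos[OF assms] evidence_changed_bounds[OF assms(2), of k]
  unfolding Wpost_eq_evidence_ratio[OF assms(1,2,4,3)] by auto


section \<open>One-step update of the posterior\<close>

lemma infsum_stream_lik_tail:
  "(\<Sum>\<^sub>\<infinity>m. geom_weight \<theta> m * stream_lik p q h k m * (if length h \<le> m then 1 else 0))
     = stream_lik p q h k (length h) * (1 - \<theta>) ^ length h"
proof -
  have eq: "geom_weight \<theta> m * stream_lik p q h k m * (if length h \<le> m then 1 else 0) =
      stream_lik p q h k (length h) * (geom_weight \<theta> m * (if length h \<le> m then 1 else 0))" for m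
    using stream_lik_min[of p q h k m] by (cases "length h \<le> m") (simp_all add: min_absorb2)
  have "(\<Sum>\<^sub>\<infinity>m. geom_weight \<theta> m * stream_lik p q h k m * (if length h \<le> m then 1 else 0))
      = (\<Sum>\<^sub>\<infinity>m. stream_lik p q h k (length h) * (geom_weight \<theta> m * (if length h \<le> m then 1 else 0)))"
    by (rule infsum_cong) (rule eq)
  then show ?thesis
    by (simp add: infsum_cmult_right' infsum_geom_weight_tail)
qed

lemma evidence_split:
  assumes "history_nonneg p q h"
  shows "evidence \<theta> p q h k = evidence_changed \<theta> p q h k
           + (\<Sum>\<^sub>\<infinity>m. geom_weight \<theta> m * stream_lik p q h k m * (if length h \<le> m then 1 else 0))"
    and "evidence \<theta> p q h k = evidence_changed_next \<theta> p q h k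
           + (\<Sum>\<^sub>\<infinity>m. geom_weight \<theta> m * stream_lik p q h k m * (if length h < m then 1 else 0))"
proof -
  let ?f = "\<lambda>m. geom_weight \<theta> m * stream_lik p q h k m"
  have "evidence \<theta> p q h k
      = (\<Sum>\<^sub>\<infinity>m. ?f m * (if m < length h then 1 else 0) + ?f m * (if length h \<le> m then 1 else 0))"
    unfolding evidence_def by (rule infsum_cong) auto
  then show "evidence \<theta> p q h k = evidence_changed \<theta> p q h k
      + (\<Sum>\<^sub>\<infinity>m. ?f m * (if length h \<le> m then 1 else 0))"
    unfolding evidence_changed_def by (simp add: infsum_add summable_on_stream_lik_indicator[OF assms])
  have "evidence \<theta> p q h k
      = (\<Sum>\<^sub>\<infinity>m. ?f m * (if m \<le> length h then 1 else 0) + ?f m * (if length h < m then 1 else 0))"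
    unfolding evidence_def by (rule infsum_cong) auto
  then show "evidence \<theta> p q h k = evidence_changed_next \<theta> p q h k
      + (\<Sum>\<^sub>\<infinity>m. ?f m * (if length h < m then 1 else 0))"
    unfolding evidence_changed_next_def by (simp add: infsum_add summable_on_stream_lik_indicator[OF assms])
qed

lemma evidence_changed_next_eq:
  assumes "history_nonneg p q h"
  shows "evidence_changed_next \<theta> p q h k
    = evidence_changed \<theta> p q h k + \<theta> * (evidence \<theta> p q h k - evidence_changed \<theta> p q h k)"
proof -
  let ?t = "length h"
  let ?f = "\<lambda>m. geom_weight \<theta> m * stream_lik p q h k m"
  have "evidence_changed_next \<theta> p q h k
      = (\<Sum>\<^sub>\<infinity>m. ?f m * (if m < ?t then 1 else 0) + (if m = ?t then ?f ?t else 0))"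
    unfolding evidence_changed_next_def by (rule infsum_cong) auto
  also have "\<dots> = evidence_changed \<theta> p q h k + (\<Sum>\<^sub>\<infinity>m. if m = ?t then ?f ?t else 0)"
    unfolding evidence_changed_def
  proof (rule infsum_add)
    show "(\<lambda>m. ?f m * (if m < ?t then 1 else 0)) summable_on UNIV"
      by (rule summable_on_stream_lik_indicator[OF assms])
    show "(\<lambda>m. if m = ?t then ?f ?t else 0) summable_on UNIV"
      by (subst summable_on_cong_neutral[where T = "{?t}"]) auto
  qed
  finally show ?thesis
    using evidence_split(1)[OF assms, of k] infsum_stream_lik_tail[of p q h k]
    by (simp add: infsum_at_single geom_weight_def algebra_simps)
qed

lemma pred_change_eq_Wpost:
  assumes "history_within K h" "history_nonneg p q h" "mdens \<theta> K p q h \<noteq> 0" "k \<in> {1..K}"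
  shows "pred_change \<theta> p q h k = Wpost \<theta> K p q h k + \<theta> * (1 - Wpost \<theta> K p q h k)"
  unfolding pred_change_def Wpost_eq_evidence_ratio[OF assms(1,2,4,3)]
    evidence_changed_next_eq[OF assms(2)]
  using evidence_pos[OF assms] by (simp add: field_simps)

lemma pred_change_bounds:
  assumes "history_within K h" "history_nonneg p q h" "mdens \<theta> K p q h \<noteq> 0" "k \<in> {1..K}"
  shows "0 \<le> pred_change \<theta> p q h k" "pred_change \<theta> p q h k \<le> 1"
proof -
  note W = Wpost_bounds[OF assms]
  have "0 \<le> \<theta> * (1 - Wpost \<theta> K p q h k)" "\<theta> * (1 - Wpost \<theta> K p q h k) \<le> 1 - Wpost \<theta> K p q h k"
    using W \<theta>_pos \<theta>_less_1 by (auto intro: mult_left_le_one_le)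
  then show "0 \<le> pred_change \<theta> p q h k" "pred_change \<theta> p q h k \<le> 1"
    using W unfolding pred_change_eq_Wpost[OF assms] by linarith+
qed

lemma pred_change_mono:
  assumes "history_within K h" "history_nonneg p q h" "mdens \<theta> K p q h \<noteq> 0"
    and "j \<in> {1..K}" "k \<in> {1..K}" "Wpost \<theta> K p q h j \<le> Wpost \<theta> K p q h k"
  shows "pred_change \<theta> p q h j \<le> pred_change \<theta> p q h k"
proof -
  have "(1 - \<theta>) * Wpost \<theta> K p q h j \<le> (1 - \<theta>) * Wpost \<theta> K p q h k"
    using assms(6) \<theta>_less_1 by (intro mult_left_mono) auto
  then show ?thesis
    unfolding pred_change_eq_Wpost[OF assms(1-4)] pred_change_eq_Wpost[OF assms(1-3,5)]
    by (simp add: algebra_simps)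
qed

text \<open>At time \<open>t + 1 = length h + 1\<close> an observed stream contributes the density \<open>q\<close> exactly
  when \<open>\<tau>\<^sub>k \<le> t\<close>, and \<open>p\<close> otherwise.\<close>

lemma evidence_snoc:
  assumes "history_nonneg p q h" "k \<in> S"
  shows "evidence \<theta> p q (h @ [(S, x')]) k
    = q (x' k) * evidence_changed_next \<theta> p q h k
      + p (x' k) * (evidence \<theta> p q h k - evidence_changed_next \<theta> p q h k)"
proof -
  let ?f = "\<lambda>m. geom_weight \<theta> m * stream_lik p q h k m"
  have "evidence \<theta> p q (h @ [(S, x')]) k = (\<Sum>\<^sub>\<infinity>m. q (x' k) * (?f m * (if m \<le> length h then 1 else 0))
      + p (x' k) * (?f m * (if length h < m then 1 else 0)))"
    unfolding evidence_def stream_lik_snoc using assms(2) by (intro infsum_cong) (auto simp: obs_dens_def)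
  also have "\<dots> = q (x' k) * evidence_changed_next \<theta> p q h k
      + p (x' k) * (\<Sum>\<^sub>\<infinity>m. ?f m * (if length h < m then 1 else 0))"
    unfolding evidence_changed_next_def
    by (subst infsum_add) (auto simp: infsum_cmult_right'
        intro!: summable_on_cmult_right summable_on_stream_lik_indicator[OF assms(1)])
  finally show ?thesis using evidence_split(2)[OF assms(1), of k] by simp
qed

lemma evidence_snoc_not_observed:
  "k \<notin> S \<Longrightarrow> evidence \<theta> p q (h @ [(S, x')]) k = evidence \<theta> p q h k"
  unfolding evidence_def stream_lik_snoc by simp

lemma evidence_changed_snoc:
  assumes "k \<in> S"
  shows "evidence_changed \<theta> p q (h @ [(S, x')]) k = q (x' k) * evidence_changed_next \<theta> p q h k"
proof -
  have "evidence_changed \<theta> p q (h @ [(S, x')]) k = (\<Sum>\<^sub>\<infinity>m. q (x' k) *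
      (geom_weight \<theta> m * stream_lik p q h k m * (if m \<le> length h then 1 else 0)))"
    unfolding evidence_changed_def stream_lik_snoc using assms
    by (intro infsum_cong) (auto simp: obs_dens_def)
  then show ?thesis unfolding evidence_changed_next_def by (simp add: infsum_cmult_right')
qed

lemma evidence_snoc_mix:
  assumes "history_within K h" "history_nonneg p q h" "mdens \<theta> K p q h \<noteq> 0" "k \<in> {1..K}" "k \<in> S"
  shows "evidence \<theta> p q (h @ [(S, x')]) k
    = evidence \<theta> p q h k * mix_dens p q (pred_change \<theta> p q h k) (x' k)"
  unfolding evidence_snoc[OF assms(2,5)] mix_dens_def pred_change_def
  using evidence_pos[OF assms(1-4)] by (simp add: field_simps)

lemma mdens_snoc:
  assumes "history_within K h" "history_nonneg p q h" "mdens \<theta> K p q h \<noteq> 0" "S \<subseteq> {1..K}"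
    and "\<forall>k\<in>S. p (x' k) \<ge> 0 \<and> q (x' k) \<ge> 0"
  shows "mdens \<theta> K p q (h @ [(S, x')])
    = mdens \<theta> K p q h * (\<Prod>k\<in>S. mix_dens p q (pred_change \<theta> p q h k) (x' k))"
proof -
  let ?mix = "\<lambda>k. mix_dens p q (pred_change \<theta> p q h k) (x' k)"
  have "mdens \<theta> K p q (h @ [(S, x')]) = (\<Prod>k\<in>{1..K}. evidence \<theta> p q (h @ [(S, x')]) k)"
    by (rule mdens_eq_prod_evidence[OF history_within_snoc[OF assms(1,4)] history_nonneg_snoc[OF assms(2,5)]])
  also have "\<dots> = (\<Prod>k\<in>{1..K}. evidence \<theta> p q h k * (if k \<in> S then ?mix k else 1))"
    by (intro prod.cong refl) (auto simp: evidence_snoc_mix[OF assms(1-3)] evidence_snoc_not_observed)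
  also have "\<dots> = mdens \<theta> K p q h * (\<Prod>k\<in>S. ?mix k)"
    using assms(4) by (simp add: prod.distrib mdens_eq_prod_evidence[OF assms(1,2)]
        prod.inter_restrict[symmetric] Int_absorb1)
  finally show ?thesis .
qed

lemma Wpost_snoc:
  assumes "history_within K h" "history_nonneg p q h" "mdens \<theta> K p q h \<noteq> 0" "S \<subseteq> {1..K}"
    and "\<forall>k\<in>S. p (x' k) \<ge> 0 \<and> q (x' k) \<ge> 0" and "k \<in> S"
  shows "Wpost \<theta> K p q (h @ [(S, x')]) k =
     (if mdens \<theta> K p q (h @ [(S, x')]) = 0 then 0 else post_change p q (pred_change \<theta> p q h k) (x' k))"
proof (cases "mdens \<theta> K p q (h @ [(S, x')]) = 0")
  case True
  then show ?thesis unfolding Wpost_def cexp_def by simp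
next
  case False
  have k: "k \<in> {1..K}" using assms by auto
  have Z: "evidence \<theta> p q h k > 0" by (rule evidence_pos[OF assms(1-3) k])
  have "Wpost \<theta> K p q (h @ [(S, x')]) k
      = evidence_changed \<theta> p q (h @ [(S, x')]) k / evidence \<theta> p q (h @ [(S, x')]) k"
    by (rule Wpost_eq_evidence_ratio[OF history_within_snoc[OF assms(1,4)]
          history_nonneg_snoc[OF assms(2,5)] k False])
  also have "\<dots> = post_change p q (pred_change \<theta> p q h k) (x' k)"
    unfolding evidence_changed_snoc[OF assms(6)] evidence_snoc_mix[OF assms(1-3) k assms(6)]
      post_change_def pred_change_def
    using Z by (simp add: field_simps)
  finally show ?thesis using False by simp
qed

lemma cexp_FNP_eq_average_Wpost:
  assumes "history_within K h" "history_nonneg p q h" "B \<subseteq> {1..K}"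
  shows "cexp \<theta> K p q h (FNP (length h) B) = (\<Sum>k\<in>B. Wpost \<theta> K p q h k) / real (max (card B) 1)"
proof -
  have fB: "finite B" using assms(3) finite_subset by blast
  let ?c = "real (max (card B) 1)"
  let ?I = "\<lambda>k \<tau>. prior \<theta> K \<tau> * lik p q h \<tau> * (if \<tau> k < length h then 1 else 0)"
  have "(\<Sum>\<^sub>\<infinity>\<tau>\<in>Tau K. prior \<theta> K \<tau> * lik p q h \<tau> * FNP (length h) B \<tau>)
      = (\<Sum>\<^sub>\<infinity>\<tau>\<in>Tau K. (\<Sum>k\<in>B. ?I k \<tau>) * inverse ?c)"
    unfolding FNP_def by (intro infsum_cong) (simp add: sum_distrib_left divide_inverse mult.assoc)
  also have "\<dots> = (\<Sum>\<^sub>\<infinity>\<tau>\<in>Tau K. \<Sum>k\<in>B. ?I k \<tau>) * inverse ?c"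
    by (rule infsum_cmult_left')
  also have "(\<Sum>\<^sub>\<infinity>\<tau>\<in>Tau K. \<Sum>k\<in>B. ?I k \<tau>) = (\<Sum>k\<in>B. \<Sum>\<^sub>\<infinity>\<tau>\<in>Tau K. ?I k \<tau>)"
    using assms(3) by (intro infsum_sum[OF fB] summable_on_prior_lik_indicator[OF assms(1,2)]) auto
  finally have eq: "(\<Sum>\<^sub>\<infinity>\<tau>\<in>Tau K. prior \<theta> K \<tau> * lik p q h \<tau> * FNP (length h) B \<tau>)
      = (\<Sum>k\<in>B. \<Sum>\<^sub>\<infinity>\<tau>\<in>Tau K. ?I k \<tau>) * inverse ?c" .
  show ?thesis
    unfolding cexp_def Wpost_def eq
    by (simp only: sum_divide_distrib[symmetric] divide_inverse mult_ac sum_distrib_left)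
qed

end


section \<open>Stochastic monotonicity of the Bayes update\<close>

locale density_pair =
  fixes M :: "'x measure" and p q :: "'x \<Rightarrow> real"
  assumes sigma_finite: "sigma_finite_measure M"
    and p_measurable[measurable]: "p \<in> borel_measurable M" and q_measurable[measurable]: "q \<in> borel_measurable M"
    and p_nonneg: "\<forall>x\<in>space M. p x \<ge> 0" and q_nonneg: "\<forall>x\<in>space M. q x \<ge> 0"
    and p_normalized: "(\<integral>\<^sup>+x. ennreal (p x) \<partial>M) = 1" and q_normalized: "(\<integral>\<^sup>+x. ennreal (q x) \<partial>M) = 1"
begin

lemma p_integrable: "integrable M p" and integral_p: "integral\<^sup>L M p = 1"
  using nn_integral_eq_integrable[of p M 1] p_normalized p_nonneg by (auto intro: AE_I2)

lemma q_integrable: "integrable M q" and integral_q: "integral\<^sup>L M q = 1"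
  using nn_integral_eq_integrable[of q M 1] q_normalized q_nonneg by (auto intro: AE_I2)

lemma measure_density_real:
  fixes f :: "'x \<Rightarrow> real"
  assumes f[measurable]: "f \<in> borel_measurable M" and nn: "\<forall>x\<in>space M. f x \<ge> 0" and int: "integrable M f"
    and A[measurable]: "A \<in> sets M"
  shows "measure (density M (\<lambda>x. ennreal (f x))) A = (LINT x|M. f x * indicator A x)"
proof -
  have "emeasure (density M (\<lambda>x. ennreal (f x))) A = (\<integral>\<^sup>+ x. ennreal (f x) * indicator A x \<partial>M)"
    by (rule emeasure_density) auto
  also have "\<dots> = (\<integral>\<^sup>+ x. ennreal (f x * indicator A x) \<partial>M)"
    by (intro nn_integral_cong) (auto split: split_indicator)
  also have "\<dots> = ennreal (LINT x|M. f x * indicator A x)"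
    using nn by (intro nn_integral_eq_integral integrable_real_mult_indicator int A AE_I2) (auto split: split_indicator)
  finally show ?thesis
    using nn by (simp add: measure_def integral_nonneg_AE AE_I2 split: split_indicator)
qed

definition "mix_measure \<pi> = density M (\<lambda>x. ennreal (mix_dens p q \<pi> x))"

lemma mix_dens_measurable[measurable]: "mix_dens p q \<pi> \<in> borel_measurable M"
  unfolding mix_dens_def[abs_def] by measurable

lemma post_change_measurable[measurable]: "post_change p q \<pi> \<in> borel_measurable M"
  unfolding post_change_def[abs_def] by measurable

lemma mix_dens_nonneg: "0 \<le> \<pi> \<Longrightarrow> \<pi> \<le> 1 \<Longrightarrow> x \<in> space M \<Longrightarrow> mix_dens p q \<pi> x \<ge> 0"
  unfolding mix_dens_def using p_nonneg q_nonneg by (simp add: add_nonneg_nonneg)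

lemma mix_dens_integrable: "integrable M (mix_dens p q \<pi>)"
  unfolding mix_dens_def[abs_def] using p_integrable q_integrable by simp

lemma measure_mix_measure:
  assumes "0 \<le> \<pi>" "\<pi> \<le> 1" "A \<in> sets M"
  shows "measure (mix_measure \<pi>) A = \<pi> * (LINT x|M. q x * indicator A x) + (1 - \<pi>) * (LINT x|M. p x * indicator A x)"
proof -
  have "measure (mix_measure \<pi>) A = (LINT x|M. mix_dens p q \<pi> x * indicator A x)"
    unfolding mix_measure_def using assms mix_dens_nonneg by (intro measure_density_real mix_dens_integrable) auto
  also have "\<dots> = (LINT x|M. \<pi> * (q x * indicator A x) + (1 - \<pi>) * (p x * indicator A x))"
    by (intro Bochner_Integration.integral_cong) (auto simp: mix_dens_def algebra_simps)
  also have "\<dots> = \<pi> * (LINT x|M. q x * indicator A x) + (1 - \<pi>) * (LINT x|M. p x * indicator A x)"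
    using assms p_integrable q_integrable
    by (subst Bochner_Integration.integral_add) (auto intro!: integrable_real_mult_indicator)
  finally show ?thesis .
qed

lemma prob_space_mix_measure:
  assumes "0 \<le> \<pi>" "\<pi> \<le> 1"
  shows "prob_space (mix_measure \<pi>)"
proof (rule prob_spaceI)
  have sp: "space (mix_measure \<pi>) = space M" by (simp add: mix_measure_def)
  have "emeasure (mix_measure \<pi>) (space (mix_measure \<pi>)) = (\<integral>\<^sup>+ x. ennreal (mix_dens p q \<pi> x) * indicator (space M) x \<partial>M)"
    unfolding sp unfolding mix_measure_def by (rule emeasure_density) auto
  also have "\<dots> = (\<integral>\<^sup>+ x. ennreal \<pi> * ennreal (q x) + ennreal (1 - \<pi>) * ennreal (p x) \<partial>M)"
  proof (rule nn_integral_cong)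
    fix x assume x: "x \<in> space M"
    have "ennreal (mix_dens p q \<pi> x) = ennreal (\<pi> * q x) + ennreal ((1 - \<pi>) * p x)"
      unfolding mix_dens_def using assms p_nonneg q_nonneg x by (intro ennreal_plus) auto
    also have "\<dots> = ennreal \<pi> * ennreal (q x) + ennreal (1 - \<pi>) * ennreal (p x)"
      using assms p_nonneg q_nonneg x by (simp add: ennreal_mult)
    finally show "ennreal (mix_dens p q \<pi> x) * indicator (space M) x = ennreal \<pi> * ennreal (q x) + ennreal (1 - \<pi>) * ennreal (p x)"
      using x by simp
  qed
  also have "\<dots> = ennreal \<pi> * (\<integral>\<^sup>+ x. ennreal (q x) \<partial>M) + ennreal (1 - \<pi>) * (\<integral>\<^sup>+ x. ennreal (p x) \<partial>M)"
    by (subst nn_integral_add) (auto simp: nn_integral_cmult)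
  also have "\<dots> = ennreal \<pi> + ennreal (1 - \<pi>)" by (simp add: p_normalized q_normalized)
  also have "\<dots> = ennreal (\<pi> + (1 - \<pi>))" using assms by (intro ennreal_plus[symmetric]) auto
  finally show "emeasure (mix_measure \<pi>) (space (mix_measure \<pi>)) = 1" by simp
qed

lemma post_change_bounds:
  assumes "0 \<le> \<pi>" "\<pi> \<le> 1" "x \<in> space M"
  shows "0 \<le> post_change p q \<pi> x" "post_change p q \<pi> x \<le> 1"
proof -
  have a: "0 \<le> \<pi> * q x" "0 \<le> (1 - \<pi>) * p x" using assms p_nonneg q_nonneg by auto
  then show "0 \<le> post_change p q \<pi> x" unfolding post_change_def mix_dens_def by simp
  show "post_change p q \<pi> x \<le> 1"
  proof (cases "\<pi> * q x + (1 - \<pi>) * p x = 0")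
    case False
    then have "\<pi> * q x + (1 - \<pi>) * p x > 0" using a by linarith
    then show ?thesis unfolding post_change_def mix_dens_def using a by (simp add: divide_le_eq)
  qed (simp add: post_change_def mix_dens_def)
qed

definition "post_law \<pi> = distr (mix_measure \<pi>) borel (post_change p q \<pi>)"

lemma post_change_measurable_mix[measurable]: "post_change p q \<pi> \<in> borel_measurable (mix_measure \<pi>)"
  unfolding mix_measure_def by (subst measurable_cong_sets[OF sets_density refl]) simp

lemma real_distribution_post_law:
  assumes "0 \<le> \<pi>" "\<pi> \<le> 1"
  shows "real_distribution (post_law \<pi>)"
proof -
  interpret prob_space "mix_measure \<pi>" by (rule prob_space_mix_measure[OF assms])
  have "prob_space (post_law \<pi>)" unfolding post_law_def by (rule prob_space_distr) simp
  then show ?thesis unfolding real_distribution_def real_distribution_axioms_def post_law_def by simp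
qed

lemma post_change_le_iff:
  assumes "0 \<le> \<pi>" "\<pi> \<le> 1" "x \<in> space M" "0 \<le> c"
  shows "post_change p q \<pi> x \<le> c \<longleftrightarrow> \<pi> * (1 - c) * q x \<le> c * (1 - \<pi>) * p x"
proof -
  have a: "0 \<le> \<pi> * q x" "0 \<le> (1 - \<pi>) * p x" using assms p_nonneg q_nonneg by auto
  show ?thesis
  proof (cases "mix_dens p q \<pi> x = 0")
    case True
    then have "\<pi> * q x = 0" "(1 - \<pi>) * p x = 0" using a unfolding mix_dens_def by linarith+
    moreover have "\<pi> * (1 - c) * q x = (1 - c) * (\<pi> * q x)" "c * (1 - \<pi>) * p x = c * ((1 - \<pi>) * p x)"
      by (simp_all add: mult_ac)
    ultimately show ?thesis using True assms unfolding post_change_def by auto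
  next
    case False
    then have pos: "mix_dens p q \<pi> x > 0" using a unfolding mix_dens_def by auto
    have "post_change p q \<pi> x \<le> c \<longleftrightarrow> \<pi> * q x \<le> c * mix_dens p q \<pi> x"
      unfolding post_change_def using pos by (simp add: divide_le_eq mult.commute)
    also have "\<dots> \<longleftrightarrow> \<pi> * (1 - c) * q x \<le> c * (1 - \<pi>) * p x"
      unfolding mix_dens_def by (simp add: algebra_simps)
    finally show ?thesis .
  qed
qed

lemma integral_indicator_add_compl:
  fixes f :: "'x \<Rightarrow> real"
  assumes "integrable M f" "A \<in> sets M"
  shows "(LINT x|M. f x * indicator A x) + (LINT x|M. f x * indicator (space M - A) x) = integral\<^sup>L M f"
proof -
  have "(LINT x|M. f x * indicator A x) + (LINT x|M. f x * indicator (space M - A) x)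
      = (LINT x|M. f x * indicator A x + f x * indicator (space M - A) x)"
    using assms by (intro Bochner_Integration.integral_add[symmetric] integrable_real_mult_indicator) auto
  also have "\<dots> = integral\<^sup>L M f"
    by (intro Bochner_Integration.integral_cong) (auto split: split_indicator)
  finally show ?thesis .
qed

text \<open>A Neyman--Pearson type inequality: a likelihood-ratio set \<open>{a q \<le> b p}\<close> carries no more
  \<open>q\<close>-mass than \<open>p\<close>-mass. If \<open>b < a\<close> then \<open>q \<le> p\<close> on the set; otherwise \<open>p < q\<close> on its
  complement, and both densities have total mass 1.\<close>

lemma lr_set_integral_q_le_p:
  fixes a b :: real
  assumes a0: "0 \<le> a" and b0: "0 \<le> b"
  defines "A \<equiv> {x\<in>space M. a * q x \<le> b * p x}"
  shows "(LINT x|M. q x * indicator A x) \<le> (LINT x|M. p x * indicator A x)"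
proof -
  have A[measurable]: "A \<in> sets M" unfolding A_def by measurable
  have int: "integrable M (\<lambda>x. f x * indicator E x)" if "integrable M f" "E \<in> sets M" for f :: "'x \<Rightarrow> real" and E
    using that by (rule integrable_real_mult_indicator[rotated])
  show ?thesis
  proof (cases "b < a")
    case True
    have "q x \<le> p x" if "x \<in> A" for x
    proof -
      have "b * p x \<le> a * p x" using True p_nonneg that by (intro mult_right_mono) (auto simp: A_def)
      then have "a * q x \<le> a * p x" using that by (auto simp: A_def)
      then show ?thesis using True b0 by (simp add: mult_le_cancel_left_pos)
    qed
    then show ?thesis
      by (intro integral_mono int p_integrable q_integrable A) (auto split: split_indicator)
  next
    case False
    have "p x \<le> q x" if "x \<in> space M - A" for x
    proof -
      have "a * q x \<le> b * q x" using False q_nonneg that by (intro mult_right_mono) auto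
      then have "b * p x < b * q x" using that by (auto simp: A_def)
      then show ?thesis using b0 by (metis mult_less_cancel_left_disj not_less less_imp_le)
    qed
    then have "(LINT x|M. p x * indicator (space M - A) x) \<le> (LINT x|M. q x * indicator (space M - A) x)"
      by (intro integral_mono int p_integrable q_integrable) (auto split: split_indicator)
    then show ?thesis
      using integral_indicator_add_compl[OF p_integrable A] integral_indicator_add_compl[OF q_integrable A]
        integral_p integral_q by linarith
  qed
qed

lemma cdf_post_law:
  "0 \<le> \<pi> \<Longrightarrow> \<pi> \<le> 1 \<Longrightarrow> cdf (post_law \<pi>) c = measure (mix_measure \<pi>) {x\<in>space M. post_change p q \<pi> x \<le> c}"
  unfolding cdf_def post_law_def
  by (subst measure_distr) (auto simp: mix_measure_def intro!: arg_cong[where f="measure _"])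

lemma measure_mix_measure_antimono:
  assumes "0 \<le> \<pi>" "\<pi> \<le> \<pi>'" "\<pi>' \<le> 1" "E \<in> sets M"
    and "(LINT x|M. q x * indicator E x) \<le> (LINT x|M. p x * indicator E x)"
  shows "measure (mix_measure \<pi>') E \<le> measure (mix_measure \<pi>) E"
proof -
  have "(\<pi>' - \<pi>) * (LINT x|M. q x * indicator E x) \<le> (\<pi>' - \<pi>) * (LINT x|M. p x * indicator E x)"
    using assms by (intro mult_left_mono) auto
  then show ?thesis
    using assms by (simp add: measure_mix_measure algebra_simps)
qed

lemma cdf_post_law_antimono_on_unit:
  assumes "0 \<le> \<pi>" "\<pi> \<le> \<pi>'" "\<pi>' \<le> 1" and c: "0 \<le> c" "c < 1"
  shows "cdf (post_law \<pi>') c \<le> cdf (post_law \<pi>) c"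
proof -
  interpret P: prob_space "mix_measure \<pi>" by (rule prob_space_mix_measure) (use assms in auto)
  define E where "E r = {x\<in>space M. r * (1 - c) * q x \<le> c * (1 - r) * p x}" for r
  have E_sets[measurable]: "E r \<in> sets M" for r unfolding E_def by measurable
  have cdf_E: "cdf (post_law r) c = measure (mix_measure r) (E r)" if "0 \<le> r" "r \<le> 1" for r
    unfolding cdf_post_law[OF that] E_def using post_change_le_iff[OF that _ c(1)]
    by (intro arg_cong[where f="measure _"]) auto
  have "E \<pi>' \<subseteq> E \<pi>"
  proof
    fix x assume "x \<in> E \<pi>'"
    then have x: "x \<in> space M" and le: "\<pi>' * (1 - c) * q x \<le> c * (1 - \<pi>') * p x"
      by (auto simp: E_def)
    have "\<pi> * (1 - c) * q x \<le> \<pi>' * (1 - c) * q x"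
      using assms q_nonneg x by (intro mult_right_mono) auto
    moreover have "c * (1 - \<pi>') * p x \<le> c * (1 - \<pi>) * p x"
      using assms p_nonneg x by (intro mult_right_mono mult_left_mono) auto
    ultimately show "x \<in> E \<pi>" using le x by (auto simp: E_def)
  qed
  have "cdf (post_law \<pi>') c = measure (mix_measure \<pi>') (E \<pi>')" using assms by (intro cdf_E) auto
  also have "\<dots> \<le> measure (mix_measure \<pi>) (E \<pi>')"
    using assms unfolding E_def
    by (intro measure_mix_measure_antimono lr_set_integral_q_le_p) (auto simp: E_def[symmetric])
  also have "\<dots> \<le> measure (mix_measure \<pi>) (E \<pi>)"
    using \<open>E \<pi>' \<subseteq> E \<pi>\<close> by (intro P.finite_measure_mono) (simp_all add: mix_measure_def E_sets)
  also have "\<dots> = cdf (post_law \<pi>) c" using assms by (intro cdf_E[symmetric]) auto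
  finally show ?thesis .
qed

lemma cdf_post_law_antimono:
  assumes "0 \<le> \<pi>" "\<pi> \<le> \<pi>'" "\<pi>' \<le> 1"
  shows "cdf (post_law \<pi>') c \<le> cdf (post_law \<pi>) c"
proof -
  have \<pi>: "0 \<le> \<pi>'" "\<pi> \<le> 1" using assms by auto
  consider "c < 0" | "1 \<le> c" | "0 \<le> c" "c < 1" by linarith
  then show ?thesis
  proof cases
    case 1
    then have empty: "{x\<in>space M. post_change p q \<pi>' x \<le> c} = {}"
      using post_change_bounds[OF \<pi>(1) assms(3)] by force
    have "cdf (post_law \<pi>') c = 0" unfolding cdf_post_law[OF \<pi>(1) assms(3)] empty by simp
    then show ?thesis by (simp add: cdf_def)
  next
    case 2
    interpret P: prob_space "mix_measure \<pi>" by (rule prob_space_mix_measure[OF assms(1) \<pi>(2)])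
    interpret D': real_distribution "post_law \<pi>'" by (rule real_distribution_post_law[OF \<pi>(1) assms(3)])
    have "{x\<in>space M. post_change p q \<pi> x \<le> c} = space (mix_measure \<pi>)"
      using post_change_bounds[OF assms(1) \<pi>(2)] 2 by (force simp: mix_measure_def)
    then have "cdf (post_law \<pi>) c = 1"
      unfolding cdf_post_law[OF assms(1) \<pi>(2)] using P.prob_space by simp
    then show ?thesis using D'.cdf_bounded_prob[of c] by simp
  qed (rule cdf_post_law_antimono_on_unit[OF assms])
qed

end

section \<open>Sorted vectors and their partial order\<close>

lemma sorted_nth_le_iff:
  fixes ys :: "real list"
  assumes "sorted ys" "i < length ys"
  shows "ys ! i \<le> c \<longleftrightarrow> i < length (filter (\<lambda>x. x \<le> c) ys)"
  using assms
proof (induction ys arbitrary: i)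
  case (Cons y ys)
  show ?case
  proof (cases "y \<le> c")
    case True
    then show ?thesis using Cons by (cases i) auto
  next
    case False
    have "\<forall>x\<in>set ys. y \<le> x" using Cons.prems by simp
    then have f: "filter (\<lambda>x. x \<le> c) ys = []" using False by (auto simp: filter_empty_conv)
    have "y \<le> (y # ys) ! i"
      using Cons.prems by (cases i) (auto)
    then show ?thesis using False f by auto
  qed
qed simp

lemma sort_nth_le_iff:
  fixes xs :: "real list"
  assumes "i < length xs"
  shows "sort xs ! i \<le> c \<longleftrightarrow> i < length (filter (\<lambda>x. x \<le> c) xs)"
proof -
  have "sort xs ! i \<le> c \<longleftrightarrow> i < length (filter (\<lambda>x. x \<le> c) (sort xs))"
    by (rule sorted_nth_le_iff) (use assms in auto)
  also have "length (filter (\<lambda>x. x \<le> c) (sort xs)) = length (filter (\<lambda>x. x \<le> c) xs)"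
    by (simp add: filter_sort)
  finally show ?thesis .
qed

lemma length_filter_map_sorted_list_of_set:
  fixes Y :: "'a::linorder \<Rightarrow> real"
  assumes "finite C"
  shows "length (filter (\<lambda>x. x \<le> c) (map Y (sorted_list_of_set C))) = card {x\<in>C. Y x \<le> c}"
proof -
  have "length (filter (\<lambda>x. x \<le> c) (map Y (sorted_list_of_set C)))
      = length (filter (\<lambda>x. Y x \<le> c) (sorted_list_of_set C))"
    by (simp add: filter_map o_def)
  also have "\<dots> = card (set (filter (\<lambda>x. Y x \<le> c) (sorted_list_of_set C)))"
    by (rule distinct_card[symmetric]) simp
  also have "\<dots> = card {x\<in>C. Y x \<le> c}"
    using assms by (simp add: set_filter)
  finally show ?thesis .
qed

lemma preceq_sort_map_inj:
  fixes Y :: "'a::linorder \<Rightarrow> real" and Z :: "'b::linorder \<Rightarrow> real"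
  assumes fB: "finite B" and fC: "finite C" and inj: "inj_on \<phi> B" and im: "\<phi> ` B \<subseteq> C"
    and le: "\<And>b. b \<in> B \<Longrightarrow> Y (\<phi> b) \<le> Z b"
  shows "preceq (sort (map Y (sorted_list_of_set C))) (sort (map Z (sorted_list_of_set B)))"
  unfolding preceq_def
proof (intro conjI allI impI)
  have "card B \<le> card C" using card_inj_on_le[OF inj im fC] .
  then show "length (sort (map Z (sorted_list_of_set B))) \<le> length (sort (map Y (sorted_list_of_set C)))"
    using fB fC by simp
  fix i assume i: "i < length (sort (map Z (sorted_list_of_set B)))"
  then have iB: "i < card B" using fB by simp
  define c where "c = sort (map Z (sorted_list_of_set B)) ! i"
  have "i < card {b\<in>B. Z b \<le> c}"
    using sort_nth_le_iff[of i "map Z (sorted_list_of_set B)" c] iB fB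
    unfolding length_filter_map_sorted_list_of_set[OF fB] by (simp add: c_def)
  also have "card {b\<in>B. Z b \<le> c} \<le> card {x\<in>C. Y x \<le> c}"
  proof (rule card_inj_on_le[where f=\<phi>])
    show "inj_on \<phi> {b \<in> B. Z b \<le> c}" using inj by (rule inj_on_subset) auto
    show "\<phi> ` {b \<in> B. Z b \<le> c} \<subseteq> {x \<in> C. Y x \<le> c}" using im le by (force intro: order_trans)
    show "finite {x \<in> C. Y x \<le> c}" using fC by simp
  qed
  finally have "i < card {x\<in>C. Y x \<le> c}" .
  moreover have "i < length (map Y (sorted_list_of_set C))"
    using iB \<open>card B \<le> card C\<close> fC by simp
  ultimately show "sort (map Y (sorted_list_of_set C)) ! i \<le> sort (map Z (sorted_list_of_set B)) ! i"
    using sort_nth_le_iff[of i "map Y (sorted_list_of_set C)" c] unfolding length_filter_map_sorted_list_of_set[OF fC] c_def by simp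
qed


definition "list_generators = range (\<lambda>n. {xs::real list. length xs = n}) \<union>
      {{xs. i < length xs \<and> xs ! i \<in> B} | i B. B \<in> sets borel}"

lemma list_borel_eq_sigma: "list_borel = sigma UNIV list_generators"
  unfolding list_borel_def list_generators_def ..

lemma sets_list_borel: "sets list_borel = sigma_sets UNIV list_generators"
  unfolding list_borel_eq_sigma by (rule sets_measure_of) simp

lemma space_list_borel[simp]: "space list_borel = UNIV"
  unfolding list_borel_eq_sigma by (simp add: space_measure_of_conv)

lemma length_eq_sets_list_borel[measurable]: "{xs::real list. length xs = n} \<in> sets list_borel"
  unfolding sets_list_borel list_generators_def by (rule sigma_sets.Basic) auto

lemma nth_in_sets_list_borel: "B \<in> sets borel \<Longrightarrow> {xs::real list. i < length xs \<and> xs ! i \<in> B} \<in> sets list_borel"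
  unfolding sets_list_borel list_generators_def by (rule sigma_sets.Basic) auto

lemma measurable_list_borelI:
  assumes "\<And>n. f -` {xs. length xs = n} \<inter> space N \<in> sets N"
    and "\<And>i B. B \<in> sets borel \<Longrightarrow> f -` {xs. i < length xs \<and> xs ! i \<in> B} \<inter> space N \<in> sets N"
  shows "f \<in> measurable N list_borel"
  unfolding list_borel_eq_sigma
  by (rule measurable_measure_of) (use assms in \<open>auto simp: list_generators_def\<close>)

lemma measurable_length_list_borel[measurable]: "length \<in> measurable list_borel (count_space UNIV)"
  by (subst measurable_count_space_eq2_countable) (auto simp: vimage_def)

definition "list_entry i xs = (if i < length xs then xs ! i else (0::real))"

lemma measurable_list_entry_list_borel[measurable]: "list_entry i \<in> borel_measurable list_borel"
proof (rule measurableI)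
  fix B :: "real set" assume B: "B \<in> sets borel"
  have "list_entry i -` B \<inter> space list_borel = {xs. i < length xs \<and> xs ! i \<in> B} \<union>
      (if 0 \<in> B then (\<Union>n\<in>{..i}. {xs. length xs = n}) else {})"
    by (auto simp: list_entry_def split: if_splits)
  also have "\<dots> \<in> sets list_borel"
    using B by (auto intro!: nth_in_sets_list_borel)
  finally show "list_entry i -` B \<inter> space list_borel \<in> sets list_borel" .
qed simp

lemma measurable_length_Mo[measurable]: "length \<in> measurable (Mo K) (count_space UNIV)"
  unfolding Mo_def by (rule measurable_restrict_space1) measurable

lemma measurable_list_entry_Mo[measurable]: "list_entry i \<in> borel_measurable (Mo K)"
  unfolding Mo_def by (rule measurable_restrict_space1) measurable

lemma space_Mo: "space (Mo K) = So K"
  unfolding Mo_def by (simp add: space_restrict_space)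

lemma preceq_iff_list_entry:
  assumes "length u \<le> K" "length v \<le> K"
  shows "preceq u v \<longleftrightarrow> length v \<le> length u \<and> (\<forall>i\<in>{..<K}. i < length v \<longrightarrow> list_entry i u \<le> list_entry i v)"
  using assms unfolding preceq_def list_entry_def by auto

lemma preceq_sets_pair_Mo:
  "{z \<in> space (Mo K \<Otimes>\<^sub>M Mo K). preceq (fst z) (snd z)} \<in> sets (Mo K \<Otimes>\<^sub>M Mo K)"
proof -
  let ?sp = "space (Mo K \<Otimes>\<^sub>M Mo K)"
  have ls[measurable]: "(\<lambda>z. length (snd z)) \<in> measurable (Mo K \<Otimes>\<^sub>M Mo K) (count_space UNIV)"
    by measurable
  have lf[measurable]: "(\<lambda>z. length (fst z)) \<in> measurable (Mo K \<Otimes>\<^sub>M Mo K) (count_space UNIV)"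
    by measurable
  have s1: "{z \<in> ?sp. length (snd z) \<le> length (fst z)} \<in> sets (Mo K \<Otimes>\<^sub>M Mo K)"
  proof -
    have "{z \<in> ?sp. length (snd z) \<le> length (fst z)} = (\<Union>n. {z \<in> ?sp. length (snd z) = n} \<inter> {z \<in> ?sp. n \<le> length (fst z)})"
      by auto
    also have "\<dots> \<in> sets (Mo K \<Otimes>\<^sub>M Mo K)" by measurable
    finally show ?thesis .
  qed
  have s2: "{z \<in> ?sp. \<not> i < length (snd z)} \<in> sets (Mo K \<Otimes>\<^sub>M Mo K)" for i
    by measurable
  have s3: "{z \<in> ?sp. list_entry i (fst z) \<le> list_entry i (snd z)} \<in> sets (Mo K \<Otimes>\<^sub>M Mo K)" for i
    by measurable
  have "{z \<in> ?sp. preceq (fst z) (snd z)} =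
     {z \<in> ?sp. length (snd z) \<le> length (fst z)} \<inter> (\<Inter>i\<in>{..<K}. {z \<in> ?sp. \<not> i < length (snd z)} \<union> {z \<in> ?sp. list_entry i (fst z) \<le> list_entry i (snd z)})"
    using preceq_iff_list_entry by (auto simp: space_pair_measure space_Mo So_def)
  also have "\<dots> \<in> sets (Mo K \<Otimes>\<^sub>M Mo K)"
  proof (cases "K = 0")
    case True then show ?thesis using s1 by simp
  next
    case False
    then show ?thesis using s1 s2 s3 by (intro sets.Int sets.finite_INT) auto
  qed
  finally show ?thesis .
qed


definition clamp01 :: "real \<Rightarrow> real" where "clamp01 v = max 0 (min 1 v)"

definition sorted_clamped :: "nat set \<Rightarrow> (nat \<Rightarrow> real) \<Rightarrow> real list" where
  "sorted_clamped C y = sort (map (\<lambda>k. clamp01 (y k)) (sorted_list_of_set C))"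

lemma clamp01_measurable[measurable]: "clamp01 \<in> borel_measurable borel"
  unfolding clamp01_def[abs_def] by measurable

lemma clamp01_id: "0 \<le> v \<Longrightarrow> v \<le> 1 \<Longrightarrow> clamp01 v = v"
  unfolding clamp01_def by simp

lemma clamp01_mono: "v \<le> w \<Longrightarrow> clamp01 v \<le> clamp01 w"
  unfolding clamp01_def by simp

lemma length_sorted_clamped[simp]: "finite C \<Longrightarrow> length (sorted_clamped C y) = card C"
  unfolding sorted_clamped_def by simp

lemma sorted_clamped_So: "finite C \<Longrightarrow> card C \<le> K \<Longrightarrow> sorted_clamped C y \<in> So K"
  unfolding So_def sorted_clamped_def by (auto simp: clamp01_def)

lemma sorted_clamped_nth_le_iff:
  assumes "finite C" "i < card C"
  shows "sorted_clamped C y ! i \<le> a \<longleftrightarrow> real i < (\<Sum>k\<in>C. indicator {r. clamp01 r \<le> a} (y k))"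
proof -
  have "sorted_clamped C y ! i \<le> a \<longleftrightarrow> i < length (filter (\<lambda>x. x \<le> a) (map (\<lambda>k. clamp01 (y k)) (sorted_list_of_set C)))"
    unfolding sorted_clamped_def by (rule sort_nth_le_iff) (use assms in simp)
  also have "\<dots> \<longleftrightarrow> i < card {k\<in>C. clamp01 (y k) \<le> a}"
    using length_filter_map_sorted_list_of_set[OF assms(1), where Y="\<lambda>k. clamp01 (y k)" and c=a] by simp
  finally have 1: "sorted_clamped C y ! i \<le> a \<longleftrightarrow> i < card {k\<in>C. clamp01 (y k) \<le> a}" .
  have "real (card {k\<in>C. clamp01 (y k) \<le> a}) = (\<Sum>k\<in>C. indicator {r. clamp01 r \<le> a} (y k))"
    using assms(1) by (simp add: indicator_def sum.If_cases Int_def)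
  then show ?thesis using 1 by linarith
qed

lemma sorted_clamped_nth_measurable:
  assumes "finite C" "i < card C"
  shows "(\<lambda>y. sorted_clamped C y ! i) \<in> borel_measurable (PiM C (\<lambda>_. borel))"
proof (subst borel_measurable_iff_le, intro allI)
  fix a
  have "{w \<in> space (PiM C (\<lambda>_. borel)). sorted_clamped C w ! i \<le> a} =
      {w \<in> space (PiM C (\<lambda>_. borel)). real i < (\<Sum>k\<in>C. indicator {r. clamp01 r \<le> a} (w k))}"
    using sorted_clamped_nth_le_iff[OF assms] by auto
  also have "\<dots> \<in> sets (PiM C (\<lambda>_. borel))" by measurable
  finally show "{w \<in> space (PiM C (\<lambda>_. borel)). sorted_clamped C w ! i \<le> a} \<in> sets (PiM C (\<lambda>_. borel))" .
qed

lemma sorted_clamped_measurable: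
  assumes "finite C" "card C \<le> K"
  shows "sorted_clamped C \<in> measurable (PiM C (\<lambda>_. borel)) (Mo K)"
  unfolding Mo_def
proof (rule measurable_restrict_space2)
  show "sorted_clamped C \<in> space (PiM C (\<lambda>_. borel)) \<rightarrow> So K" using sorted_clamped_So[OF assms] by auto
  show "sorted_clamped C \<in> measurable (PiM C (\<lambda>_. borel)) list_borel"
  proof (rule measurable_list_borelI)
    fix n
    show "sorted_clamped C -` {xs. length xs = n} \<inter> space (PiM C (\<lambda>_. borel)) \<in> sets (PiM C (\<lambda>_. borel))"
      using assms by (cases "card C = n") auto
  next
    fix i and B :: "real set" assume B: "B \<in> sets borel"
    show "sorted_clamped C -` {xs. i < length xs \<and> xs ! i \<in> B} \<inter> space (PiM C (\<lambda>_. borel)) \<in> sets (PiM C (\<lambda>_. borel))"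
    proof (cases "i < card C")
      case True
      have "sorted_clamped C -` {xs. i < length xs \<and> xs ! i \<in> B} \<inter> space (PiM C (\<lambda>_. borel))
          = (\<lambda>y. sorted_clamped C y ! i) -` B \<inter> space (PiM C (\<lambda>_. borel))"
        using True assms by auto
      also have "\<dots> \<in> sets (PiM C (\<lambda>_. borel))"
        by (rule measurable_sets[OF sorted_clamped_nth_measurable[OF assms(1) True] B])
      finally show ?thesis .
    next
      case False
      then show ?thesis using assms by auto
    qed
  qed
qed



section \<open>Quantile coupling\<close>

lemma distr_PiM_componentwise:
  fixes Mi :: "'i \<Rightarrow> 'a measure" and Ni :: "'i \<Rightarrow> 'b measure"
  assumes fin: "finite I"
    and pM: "\<And>i. i \<in> I \<Longrightarrow> prob_space (Mi i)"
    and fm: "\<And>i. i \<in> I \<Longrightarrow> f i \<in> measurable (Mi i) (Ni i)"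
  shows "distr (PiM I Mi) (PiM I Ni) (\<lambda>x. \<lambda>i\<in>I. f i (x i)) = PiM I (\<lambda>i. distr (Mi i) (Ni i) (f i))"
proof -
  define D where "D i = (if i \<in> I then distr (Mi i) (Ni i) (f i) else return (count_space UNIV) undefined)" for i
  have pD: "prob_space (D i)" for i
    using pM fm by (auto simp: D_def prob_space.prob_space_distr prob_space_return)
  interpret DD: product_prob_space D by (rule product_prob_spaceI) (rule pD)
  have eqD: "PiM I (\<lambda>i. distr (Mi i) (Ni i) (f i)) = PiM I D" by (rule PiM_cong) (auto simp: D_def)
  have meas: "(\<lambda>x. \<lambda>i\<in>I. f i (x i)) \<in> measurable (PiM I Mi) (PiM I Ni)"
    by (rule measurable_restrict) (use fm in \<open>auto intro: measurable_compose[OF measurable_component_singleton]\<close>)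
  show ?thesis unfolding eqD
  proof (rule DD.PiM_eqI[OF fin])
    show "sets (distr (PiM I Mi) (PiM I Ni) (\<lambda>x. \<lambda>i\<in>I. f i (x i))) = sets (PiM I D)"
      by (simp, rule sets_PiM_cong) (auto simp: D_def)
    fix A assume A: "\<And>i. i \<in> I \<Longrightarrow> A i \<in> sets (D i)"
    then have A': "\<And>i. i \<in> I \<Longrightarrow> A i \<in> sets (Ni i)" by (simp add: D_def)
    have pre: "(\<lambda>x. \<lambda>i\<in>I. f i (x i)) -` PiE I A \<inter> space (PiM I Mi) = PiE I (\<lambda>i. f i -` A i \<inter> space (Mi i))"
      by (auto simp: space_PiM PiE_def Pi_def extensional_def)
    interpret MM: product_prob_space "\<lambda>i. if i \<in> I then Mi i else return (count_space UNIV) undefined"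
      by (rule product_prob_spaceI) (auto simp: pM prob_space_return)
    have eqM: "PiM I Mi = PiM I (\<lambda>i. if i \<in> I then Mi i else return (count_space UNIV) undefined)"
      by (rule PiM_cong) auto
    have "emeasure (distr (PiM I Mi) (PiM I Ni) (\<lambda>x. \<lambda>i\<in>I. f i (x i))) (PiE I A)
        = emeasure (PiM I Mi) (PiE I (\<lambda>i. f i -` A i \<inter> space (Mi i)))"
      using A' fin by (subst emeasure_distr[OF meas]) (auto intro!: sets_PiM_I_finite simp: pre)
    also have "\<dots> = (\<Prod>i\<in>I. emeasure (Mi i) (f i -` A i \<inter> space (Mi i)))"
      unfolding eqM using A' fm by (subst MM.emeasure_PiM[OF fin]) (auto intro!: prod.cong measurable_sets)
    also have "\<dots> = (\<Prod>i\<in>I. emeasure (D i) (A i))"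
      using A' fm by (intro prod.cong refl) (simp add: D_def emeasure_distr)
    finally show "emeasure (distr (PiM I Mi) (PiM I Ni) (\<lambda>x. \<lambda>i\<in>I. f i (x i))) (PiE I A) = (\<Prod>i\<in>I. emeasure (D i) (A i))" .
  qed
qed



definition unif01 :: "real measure" where
  "unif01 = restrict_space lborel {0<..<1}"

definition quantile :: "real measure \<Rightarrow> real \<Rightarrow> real" where
  "quantile D u = Inf {x. u \<le> cdf D x}"

lemma prob_space_unif01: "prob_space unif01"
  unfolding unif01_def by (auto simp: emeasure_restrict_space space_restrict_space intro!: prob_spaceI)

lemma space_unif01: "space unif01 = {0<..<1}"
  unfolding unif01_def by (simp add: space_restrict_space)

context
  fixes D :: "real measure"
  assumes D: "real_distribution D"
begin

interpretation cdf_distribution D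
  unfolding cdf_distribution_def by (rule D)

lemma quantile_measurable[measurable]: "quantile D \<in> borel_measurable unif01"
proof -
  have "sets unif01 = sets (restrict_space borel {0<..<1::real})"
    unfolding unif01_def by (rule sets_restrict_space_cong) simp
  then show ?thesis
    unfolding quantile_def[abs_def] using measurable_CI by (subst measurable_cong_sets[OF _ refl]) auto
qed

lemma distr_unif01_quantile: "distr unif01 borel (quantile D) = D"
  unfolding unif01_def quantile_def[abs_def] by (rule distr_I_eq_M)

lemma quantile_le_iff: "0 < u \<Longrightarrow> u < 1 \<Longrightarrow> quantile D u \<le> x \<longleftrightarrow> u \<le> cdf D x"
  unfolding quantile_def by (rule pseudoinverse[symmetric])

end

lemma quantile_mono:
  assumes "real_distribution D" "real_distribution D'" "\<And>x. cdf D' x \<le> cdf D x" "0 < u" "u < 1"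
  shows "quantile D u \<le> quantile D' u"
  using quantile_le_iff[OF assms(1,4,5)] quantile_le_iff[OF assms(2,4,5)] assms(3) order_trans
  by blast

lemma quantile_vector_measurable:
  assumes "\<And>c. c \<in> C \<Longrightarrow> real_distribution (D c)"
  shows "(\<lambda>u. \<lambda>c\<in>C. quantile (D c) (u c)) \<in> measurable (PiM C (\<lambda>_. unif01)) (PiM C (\<lambda>_. borel))"
proof (rule measurable_restrict)
  fix c assume c: "c \<in> C"
  show "(\<lambda>u. quantile (D c) (u c)) \<in> borel_measurable (PiM C (\<lambda>_. unif01))"
    by (rule measurable_compose[OF measurable_component_singleton[OF c] quantile_measurable[OF assms[OF c]]])
qed

lemma distr_PiM_quantile:
  assumes "finite C" "\<And>c. c \<in> C \<Longrightarrow> real_distribution (D c)"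
  shows "distr (PiM C (\<lambda>_. unif01)) (PiM C (\<lambda>_. borel)) (\<lambda>u. \<lambda>c\<in>C. quantile (D c) (u c)) = PiM C D"
proof -
  have "distr (PiM C (\<lambda>_. unif01)) (PiM C (\<lambda>_. borel)) (\<lambda>u. \<lambda>c\<in>C. quantile (D c) (u c))
      = PiM C (\<lambda>c. distr unif01 borel (quantile (D c)))"
    using assms by (intro distr_PiM_componentwise prob_space_unif01 quantile_measurable)
  also have "\<dots> = PiM C D"
    using assms by (intro PiM_cong refl distr_unif01_quantile)
  finally show ?thesis .
qed

lemma distr_sorted_clamped_quantile:
  assumes "finite C" "card C \<le> K" "\<And>c. c \<in> C \<Longrightarrow> real_distribution (D c)"
  shows "distr (PiM C (\<lambda>_. unif01)) (Mo K) (\<lambda>u. sorted_clamped C (\<lambda>c\<in>C. quantile (D c) (u c)))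
    = distr (PiM C D) (Mo K) (sorted_clamped C)"
proof -
  have "distr (PiM C (\<lambda>_. unif01)) (Mo K) (\<lambda>u. sorted_clamped C (\<lambda>c\<in>C. quantile (D c) (u c)))
    = distr (distr (PiM C (\<lambda>_. unif01)) (PiM C (\<lambda>_. borel)) (\<lambda>u. \<lambda>c\<in>C. quantile (D c) (u c)))
        (Mo K) (sorted_clamped C)"
    by (subst distr_distr[OF sorted_clamped_measurable[OF assms(1,2)] quantile_vector_measurable])
      (simp_all add: assms(3) comp_def)
  then show ?thesis by (simp add: distr_PiM_quantile[OF assms(1,3)])
qed

lemma coupling_of_pair:
  assumes "prob_space U" and Y: "Y \<in> measurable U N" and Z: "Z \<in> measurable U N"
    and R: "{z \<in> space (N \<Otimes>\<^sub>M N). R (fst z) (snd z)} \<in> sets (N \<Otimes>\<^sub>M N)"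
    and YZ: "\<And>u. u \<in> space U \<Longrightarrow> R (Y u) (Z u)"
  shows "\<exists>\<nu>. prob_space \<nu> \<and> sets \<nu> = sets (N \<Otimes>\<^sub>M N) \<and>
    distr \<nu> N fst = distr U N Y \<and> distr \<nu> N snd = distr U N Z \<and> (AE z in \<nu>. R (fst z) (snd z))"
proof (intro exI conjI)
  interpret prob_space U by fact
  have YZ_meas: "(\<lambda>u. (Y u, Z u)) \<in> measurable U (N \<Otimes>\<^sub>M N)"
    using Y Z by measurable
  let ?\<nu> = "distr U (N \<Otimes>\<^sub>M N) (\<lambda>u. (Y u, Z u))"
  show "prob_space ?\<nu>" by (rule prob_space_distr[OF YZ_meas])
  show "sets ?\<nu> = sets (N \<Otimes>\<^sub>M N)" by simp
  show "distr ?\<nu> N fst = distr U N Y"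
    by (subst distr_distr[OF measurable_fst YZ_meas]) (simp add: comp_def)
  show "distr ?\<nu> N snd = distr U N Z"
    by (subst distr_distr[OF measurable_snd YZ_meas]) (simp add: comp_def)
  show "AE z in ?\<nu>. R (fst z) (snd z)"
    by (subst AE_distr_iff[OF YZ_meas R]) (simp add: YZ)
qed

lemma sorted_clamped_quantile_measurable:
  assumes "finite C" "card C \<le> K" "\<And>c. c \<in> C \<Longrightarrow> real_distribution (D c)"
  shows "(\<lambda>u. sorted_clamped C (\<lambda>c\<in>C. quantile (D c) (u c))) \<in> measurable (PiM C (\<lambda>_. unif01)) (Mo K)"
  using measurable_comp[OF quantile_vector_measurable sorted_clamped_measurable[OF assms(1,2)]] assms(3)
  by (simp add: comp_def)

text \<open>Driving every \<open>b \<in> B\<close> by the uniform variable of its partner \<open>\<phi> b \<in> C\<close> does not change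
  the law on the \<open>B\<close>-side, since distinct streams get independent variables.\<close>

lemma distr_sorted_clamped_quantile_reindex:
  assumes "finite B" "card B \<le> K" "inj_on \<phi> B" "\<phi> ` B \<subseteq> C" "\<And>b. b \<in> B \<Longrightarrow> real_distribution (D b)"
  shows "distr (PiM C (\<lambda>_. unif01)) (Mo K) (\<lambda>u. sorted_clamped B (\<lambda>b\<in>B. quantile (D b) (u (\<phi> b))))
    = distr (PiM B D) (Mo K) (sorted_clamped B)"
proof -
  let ?R = "\<lambda>u. \<lambda>b\<in>B. u (\<phi> b)"
  have R_meas: "?R \<in> measurable (PiM C (\<lambda>_. unif01)) (PiM B (\<lambda>_. unif01))"
    using assms(4) by (intro measurable_restrict measurable_component_singleton) auto
  have "distr (PiM C (\<lambda>_. unif01)) (PiM B (\<lambda>_. unif01)) ?R = PiM B (\<lambda>_. unif01)"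
    using distr_PiM_reindex[of C "\<lambda>_. unif01" \<phi> B] prob_space_unif01 assms(3,4) by auto
  then have "distr (PiM C (\<lambda>_. unif01)) (Mo K) (\<lambda>u. sorted_clamped B (\<lambda>b\<in>B. quantile (D b) (?R u b)))
      = distr (PiM B (\<lambda>_. unif01)) (Mo K) (\<lambda>v. sorted_clamped B (\<lambda>b\<in>B. quantile (D b) (v b)))"
    using distr_distr[OF sorted_clamped_quantile_measurable[OF assms(1,2,5)] R_meas]
    by (simp add: comp_def cong: restrict_cong)
  also have "\<dots> = distr (PiM B D) (Mo K) (sorted_clamped B)"
    using assms by (intro distr_sorted_clamped_quantile) auto
  finally show ?thesis by (simp cong: restrict_cong)
qed

lemma preceq_sorted_clamped_quantile:
  assumes "finite B" "finite C" "inj_on \<phi> B" "\<phi> ` B \<subseteq> C"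
    and D: "\<And>k. k \<in> B \<union> C \<Longrightarrow> real_distribution (D k)"
    and dom: "\<And>b x. b \<in> B \<Longrightarrow> cdf (D b) x \<le> cdf (D (\<phi> b)) x"
    and u: "u \<in> space (PiM C (\<lambda>_. unif01))"
  shows "preceq (sorted_clamped C (\<lambda>c\<in>C. quantile (D c) (u c)))
    (sorted_clamped B (\<lambda>b\<in>B. quantile (D b) (u (\<phi> b))))"
  unfolding sorted_clamped_def
proof (rule preceq_sort_map_inj[OF assms(1-4)])
  fix b assume b: "b \<in> B"
  have \<phi>b: "\<phi> b \<in> C" using b assms(4) by auto
  then have "u (\<phi> b) \<in> {0<..<1}" using u by (auto simp: space_PiM space_unif01 PiE_iff)
  then show "clamp01 ((\<lambda>c\<in>C. quantile (D c) (u c)) (\<phi> b))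
      \<le> clamp01 ((\<lambda>b\<in>B. quantile (D b) (u (\<phi> b))) b)"
    using b \<phi>b D dom by (auto intro!: clamp01_mono quantile_mono)
qed

text \<open>The quantile transform turns the stochastic dominance of each stream over its partner
  into pointwise dominance.\<close>

lemma quantile_coupling:
  fixes D :: "nat \<Rightarrow> real measure"
  assumes fin: "finite B" "finite C" and card: "card B \<le> K" "card C \<le> K"
    and inj: "inj_on \<phi> B" and im: "\<phi> ` B \<subseteq> C"
    and D: "\<And>k. k \<in> B \<union> C \<Longrightarrow> real_distribution (D k)"
    and dom: "\<And>b x. b \<in> B \<Longrightarrow> cdf (D b) x \<le> cdf (D (\<phi> b)) x"
  shows "\<exists>\<nu>. prob_space \<nu> \<and> sets \<nu> = sets (Mo K \<Otimes>\<^sub>M Mo K) \<and>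
      distr \<nu> (Mo K) fst = distr (PiM C D) (Mo K) (sorted_clamped C) \<and>
      distr \<nu> (Mo K) snd = distr (PiM B D) (Mo K) (sorted_clamped B) \<and>
      (AE z in \<nu>. preceq (fst z) (snd z))"
proof -
  let ?U = "PiM C (\<lambda>_. unif01)"
  let ?Y = "\<lambda>u. sorted_clamped C (\<lambda>c\<in>C. quantile (D c) (u c))"
  let ?Z = "\<lambda>u. sorted_clamped B (\<lambda>b\<in>B. quantile (D b) (u (\<phi> b)))"
  have Z_meas: "?Z \<in> measurable ?U (Mo K)"
  proof -
    have "(\<lambda>u. \<lambda>b\<in>B. u (\<phi> b)) \<in> measurable ?U (PiM B (\<lambda>_. unif01))"
      using im by (intro measurable_restrict measurable_component_singleton) auto
    from measurable_comp[OF this sorted_clamped_quantile_measurable[OF fin(1) card(1)]] D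
    show ?thesis by (simp add: comp_def cong: restrict_cong)
  qed
  have "\<exists>\<nu>. prob_space \<nu> \<and> sets \<nu> = sets (Mo K \<Otimes>\<^sub>M Mo K) \<and>
      distr \<nu> (Mo K) fst = distr ?U (Mo K) ?Y \<and> distr \<nu> (Mo K) snd = distr ?U (Mo K) ?Z \<and>
      (AE z in \<nu>. preceq (fst z) (snd z))"
    using D by (intro coupling_of_pair prob_space_PiM prob_space_unif01 Z_meas preceq_sets_pair_Mo
        sorted_clamped_quantile_measurable preceq_sorted_clamped_quantile fin card inj im dom) auto
  moreover have "distr ?U (Mo K) ?Y = distr (PiM C D) (Mo K) (sorted_clamped C)"
    using D by (intro distr_sorted_clamped_quantile fin card) auto
  moreover have "distr ?U (Mo K) ?Z = distr (PiM B D) (Mo K) (sorted_clamped B)"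
    using D by (intro distr_sorted_clamped_quantile_reindex fin card inj im) auto
  ultimately show ?thesis by simp
qed


section \<open>The one-step rule\<close>


text \<open>Keys \<open>(W i, i)\<close> ordered lexicographically realise the tie-breaking order of \<open>order_by\<close>.\<close>

datatype ranked = Ranked real nat

instantiation ranked :: linorder
begin

fun less_eq_ranked :: "ranked \<Rightarrow> ranked \<Rightarrow> bool" where
  "less_eq_ranked (Ranked a i) (Ranked b j) \<longleftrightarrow> a < b \<or> (a = b \<and> i \<le> j)"

fun less_ranked :: "ranked \<Rightarrow> ranked \<Rightarrow> bool" where
  "less_ranked (Ranked a i) (Ranked b j) \<longleftrightarrow> a < b \<or> (a = b \<and> i < j)"

instance
proof
  fix x y z :: ranked
  show "(x < y) = (x \<le> y \<and> \<not> y \<le> x)" by (cases x; cases y) auto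
  show "x \<le> x" by (cases x) auto
  show "x \<le> y \<Longrightarrow> y \<le> z \<Longrightarrow> x \<le> z" by (cases x; cases y; cases z) auto
  show "x \<le> y \<Longrightarrow> y \<le> x \<Longrightarrow> x = y" by (cases x; cases y) auto
  show "x \<le> y \<or> y \<le> x" by (cases x; cases y) auto
qed

end

lemma tie_order_eq_ranked:
  fixes W :: "nat \<Rightarrow> real"
  shows "(\<lambda>i j. W i < W j \<or> (W i = W j \<and> i < j)) = (\<lambda>i j. Ranked (W i) i < Ranked (W j) j)"
  by (simp add: fun_eq_iff)

lemma order_by_unique:
  fixes W :: "nat \<Rightarrow> real"
  assumes "finite S"
  shows "\<exists>!ks. distinct ks \<and> set ks = S \<and> sorted_wrt (\<lambda>i j. W i < W j \<or> (W i = W j \<and> i < j)) ks"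
proof -
  let ?key = "\<lambda>i. Ranked (W i) i"
  have inj: "inj_on ?key A" for A by (auto simp: inj_on_def)
  have sorted_iff: "sorted_wrt (\<lambda>i j. W i < W j \<or> (W i = W j \<and> i < j)) ks
      \<longleftrightarrow> sorted (map ?key ks) \<and> distinct (map ?key ks)" for ks
  proof -
    have "sorted_wrt (\<lambda>i j. W i < W j \<or> (W i = W j \<and> i < j)) ks \<longleftrightarrow> sorted_wrt (<) (map ?key ks)"
      unfolding tie_order_eq_ranked sorted_wrt_map ..
    then show ?thesis by (simp add: strict_sorted_iff)
  qed
  define ks0 where "ks0 = sort_key ?key (sorted_list_of_set S)"
  have ks0: "distinct ks0" "set ks0 = S" "sorted (map ?key ks0)"
    using assms by (auto simp: ks0_def)
  show ?thesis
  proof (rule ex1I[of _ ks0])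
    show "distinct ks0 \<and> set ks0 = S \<and> sorted_wrt (\<lambda>i j. W i < W j \<or> (W i = W j \<and> i < j)) ks0"
      using ks0 inj by (simp add: sorted_iff distinct_map)
    fix ks assume ks: "distinct ks \<and> set ks = S \<and> sorted_wrt (\<lambda>i j. W i < W j \<or> (W i = W j \<and> i < j)) ks"
    have "map ?key ks = map ?key ks0"
      by (rule sorted_distinct_set_unique) (use ks ks0 inj in \<open>simp_all add: sorted_iff distinct_map\<close>)
    then show "ks = ks0" using inj_on_map_eq_map[OF inj] by blast
  qed
qed

lemma
  assumes "finite S"
  shows distinct_order_by: "distinct (order_by W S)"
    and set_order_by: "set (order_by W S) = S"
    and sorted_wrt_order_by: "sorted_wrt (\<lambda>i j. W i < W j \<or> (W i = W j \<and> i < j)) (order_by W S)"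
  using theI'[OF order_by_unique[OF assms, of W]] unfolding order_by_def by auto

lemma map_order_by:
  assumes "finite S"
  shows "map W (order_by W S) = sort (map W (sorted_list_of_set S))"
proof (rule properties_for_sort[symmetric])
  have "mset (order_by W S) = mset (sorted_list_of_set S)"
    using assms distinct_order_by set_order_by by (subst set_eq_iff_mset_eq_distinct[symmetric]) auto
  then show "mset (map W (order_by W S)) = mset (map W (sorted_list_of_set S))"
    by simp
  show "sorted (map W (order_by W S))"
    unfolding sorted_map by (rule sorted_wrt_mono_rel[OF _ sorted_wrt_order_by[OF assms]]) auto
qed

lemma onestep_subset: "finite S \<Longrightarrow> onestep \<alpha> S W \<subseteq> S"
  unfolding onestep_def Let_def using set_order_by set_take_subset by metis

lemma exists_inj_into_prefix:
  fixes W :: "'a \<Rightarrow> real"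
  assumes "distinct ks" "distinct bs" "length bs \<le> n" "n \<le> length ks"
    and le: "\<And>i. i < length bs \<Longrightarrow> W (ks ! i) \<le> W (bs ! i)"
  shows "\<exists>\<phi>. inj_on \<phi> (set bs) \<and> \<phi> ` set bs \<subseteq> set (take n ks) \<and> (\<forall>b\<in>set bs. W (\<phi> b) \<le> W b)"
proof -
  let ?m = "length bs"
  have bij: "bij_betw ((!) bs) {..<?m} (set bs)" by (rule bij_betw_nth) (use assms in auto)
  define idx where "idx = inv_into {..<?m} ((!) bs)"
  have idx: "bij_betw idx (set bs) {..<?m}" unfolding idx_def by (rule bij_betw_inv_into[OF bij])
  have idx_lt: "idx b < ?m" if "b \<in> set bs" for b using idx that by (auto simp: bij_betw_def)
  have nth_idx: "bs ! idx b = b" if "b \<in> set bs" for b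
    unfolding idx_def by (rule bij_betw_inv_into_right[OF bij that])
  have idx_lt_n: "idx b < length (take n ks)" if "b \<in> set bs" for b
    using idx_lt[OF that] assms(3,4) by simp
  show ?thesis
  proof (intro exI[of _ "\<lambda>b. ks ! idx b"] conjI ballI)
    show "inj_on (\<lambda>b. ks ! idx b) (set bs)"
    proof (rule inj_onI)
      fix a b assume a: "a \<in> set bs" and b: "b \<in> set bs" and eq: "ks ! idx a = ks ! idx b"
      have "idx a < length ks" "idx b < length ks" using idx_lt_n[OF a] idx_lt_n[OF b] by simp_all
      then have "idx a = idx b" using nth_eq_iff_index_eq[OF assms(1)] eq by simp
      then show "a = b" using nth_idx[OF a] nth_idx[OF b] by metis
    qed
    show "(\<lambda>b. ks ! idx b) ` set bs \<subseteq> set (take n ks)"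
    proof
      fix c assume "c \<in> (\<lambda>b. ks ! idx b) ` set bs"
      then obtain b where b: "b \<in> set bs" and c: "c = ks ! idx b" by blast
      have "take n ks ! idx b \<in> set (take n ks)" by (rule nth_mem[OF idx_lt_n[OF b]])
      then show "c \<in> set (take n ks)" using idx_lt_n[OF b] c by simp
    qed
    fix b assume b: "b \<in> set bs"
    show "W (ks ! idx b) \<le> W b" using le[OF idx_lt[OF b]] nth_idx[OF b] by simp
  qed
qed

lemma
  fixes W :: "nat \<Rightarrow> real"
  assumes fS: "finite S" and BS: "B \<subseteq> S"
  shows card_le_length_order_by: "card B \<le> length (order_by W S)"
    and order_by_nth_le: "i < card B \<Longrightarrow> W (order_by W S ! i) \<le> W (sort_key W (sorted_list_of_set B) ! i)"
proof -
  have fB: "finite B" using fS BS finite_subset by blast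
  have "preceq (sort (map W (sorted_list_of_set S))) (sort (map W (sorted_list_of_set B)))"
    by (rule preceq_sort_map_inj[where \<phi> = id]) (use fB fS BS in auto)
  moreover have "map W (sort_key W (sorted_list_of_set B)) = sort (map W (sorted_list_of_set B))"
    by (rule properties_for_sort[symmetric]) simp_all
  ultimately have "preceq (map W (order_by W S)) (map W (sort_key W (sorted_list_of_set B)))"
    by (simp add: map_order_by[OF fS])
  then show "card B \<le> length (order_by W S)"
    and "i < card B \<Longrightarrow> W (order_by W S ! i) \<le> W (sort_key W (sorted_list_of_set B) ! i)"
    using fB by (auto simp: preceq_def)
qed

lemma R_avg_order_by_le:
  fixes W :: "nat \<Rightarrow> real"
  assumes fS: "finite S" and BS: "B \<subseteq> S" and "0 \<le> \<alpha>"
    and avg: "(\<Sum>k\<in>B. W k) / real (max (card B) 1) \<le> \<alpha>"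
  shows "R_avg W (order_by W S) (card B) \<le> \<alpha>"
proof (cases "card B = 0")
  case False
  let ?bs = "sort_key W (sorted_list_of_set B)"
  have fB: "finite B" using fS BS finite_subset by blast
  have "(\<Sum>i<card B. W (order_by W S ! i)) \<le> (\<Sum>i<card B. W (?bs ! i))"
    by (intro sum_mono order_by_nth_le[OF fS BS]) auto
  also have "\<dots> = sum_list (map W ?bs)"
    using fB by (simp add: sum_list_sum_nth atLeast0LessThan)
  also have "\<dots> = (\<Sum>k\<in>B. W k)"
    using fB by (simp add: sum_list_distinct_conv_sum_set)
  finally have "R_avg W (order_by W S) (card B) \<le> (\<Sum>k\<in>B. W k) / real (card B)"
    using False by (simp add: R_avg_def divide_right_mono)
  also have "\<dots> \<le> \<alpha>" using avg False by simp
  finally show ?thesis .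
qed (use assms(3) in \<open>simp add: R_avg_def\<close>)

lemma onestep_dominates:
  fixes W :: "nat \<Rightarrow> real"
  assumes fS: "finite S" and BS: "B \<subseteq> S" and "0 \<le> \<alpha>"
    and avg: "(\<Sum>k\<in>B. W k) / real (max (card B) 1) \<le> \<alpha>"
  shows "\<exists>\<phi>. inj_on \<phi> B \<and> \<phi> ` B \<subseteq> onestep \<alpha> S W \<and> (\<forall>b\<in>B. W (\<phi> b) \<le> W b)"
proof -
  let ?ks = "order_by W S" and ?bs = "sort_key W (sorted_list_of_set B)"
  define n where "n = (GREATEST n. n \<le> length ?ks \<and> R_avg W ?ks n \<le> \<alpha>)"
  have fB: "finite B" using fS BS finite_subset by blast
  have P: "card B \<le> length ?ks \<and> R_avg W ?ks (card B) \<le> \<alpha>"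
    using card_le_length_order_by[OF fS BS] R_avg_order_by_le[OF assms] by simp
  have "card B \<le> n" unfolding n_def by (rule Greatest_le_nat[of _ _ "length ?ks"]) (use P in auto)
  moreover have "n \<le> length ?ks"
    unfolding n_def by (rule conjunct1[OF GreatestI_nat[of _ "card B" "length ?ks"]]) (use P in auto)
  ultimately have "\<exists>\<phi>. inj_on \<phi> (set ?bs) \<and> \<phi> ` set ?bs \<subseteq> set (take n ?ks) \<and> (\<forall>b\<in>set ?bs. W (\<phi> b) \<le> W b)"
    using fB order_by_nth_le[OF fS BS]
    by (intro exists_inj_into_prefix distinct_order_by[OF fS]) simp_all
  moreover have "onestep \<alpha> S W = set (take n ?ks)"
    unfolding onestep_def Let_def n_def ..
  ultimately show ?thesis using fB by simp
qed


section \<open>The law of the updated posteriors\<close>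

lemma prod_indicator_PiE:
  fixes g :: "'i \<Rightarrow> 'a \<Rightarrow> ennreal"
  assumes "finite I" "x \<in> extensional I"
  shows "(\<Prod>i\<in>I. g i (x i)) * indicator (PiE I A) x = (\<Prod>i\<in>I. g i (x i) * indicator (A i) (x i))"
proof (cases "x \<in> PiE I A")
  case True
  then show ?thesis by (auto simp: PiE_def Pi_def intro!: prod.cong)
next
  case False
  then obtain j where "j \<in> I" "x j \<notin> A j" using assms(2) by (auto simp: PiE_def Pi_def)
  then show ?thesis using assms(1) False by (auto intro!: prod_zero bexI[of _ j])
qed

lemma density_cong_space:
  "(\<And>x. x \<in> space M \<Longrightarrow> f x = g x) \<Longrightarrow> density M f = density M g"
  unfolding density_def by (simp cong: nn_integral_cong)

lemma density_PiM_prod: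
  fixes f :: "'i \<Rightarrow> 'x \<Rightarrow> ennreal"
  assumes sf: "sigma_finite_measure M" and fin: "finite I" and fm[measurable]: "\<And>i. i \<in> I \<Longrightarrow> f i \<in> borel_measurable M"
    and pr: "\<And>i. i \<in> I \<Longrightarrow> prob_space (density M (f i))"
  shows "density (PiM I (\<lambda>_. M)) (\<lambda>x. \<Prod>i\<in>I. f i (x i)) = PiM I (\<lambda>i. density M (f i))"
proof -
  define g where "g i = (if i \<in> I then f i else (\<lambda>_. 1))" for i
  have gm[measurable]: "g i \<in> borel_measurable M" for i by (auto simp: g_def)
  have sfg: "sigma_finite_measure (density M (g i))" for i
  proof (cases "i \<in> I")
    case True then show ?thesis using pr[OF True] by (simp add: g_def prob_space_imp_sigma_finite)
  next
    case False then show ?thesis using sf by (simp add: g_def density_1)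
  qed
  interpret N: product_sigma_finite "\<lambda>i. density M (g i)"
    by (simp add: product_sigma_finite_def sfg)
  interpret MM: product_sigma_finite "\<lambda>_. M"
    by (simp add: product_sigma_finite_def sf)
  have eqP: "PiM I (\<lambda>i. density M (f i)) = PiM I (\<lambda>i. density M (g i))"
    by (rule PiM_cong) (auto simp: g_def)
  have eqF: "(\<lambda>x. \<Prod>i\<in>I. f i (x i)) = (\<lambda>x. \<Prod>i\<in>I. g i (x i))"
    by (auto simp: g_def intro!: prod.cong)
  show ?thesis unfolding eqP eqF
  proof (rule N.PiM_eqI[OF fin])
    show "sets (density (PiM I (\<lambda>_. M)) (\<lambda>x. \<Prod>i\<in>I. g i (x i))) = sets (PiM I (\<lambda>i. density M (g i)))"
      unfolding sets_density by (rule sets_PiM_cong) auto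
    fix A assume A: "\<And>i. i \<in> I \<Longrightarrow> A i \<in> sets (density M (g i))"
    then have A'[measurable]: "\<And>i. i \<in> I \<Longrightarrow> A i \<in> sets M" by simp
    have "emeasure (density (PiM I (\<lambda>_. M)) (\<lambda>x. \<Prod>i\<in>I. g i (x i))) (PiE I A)
        = (\<integral>\<^sup>+ x. (\<Prod>i\<in>I. g i (x i)) * indicator (PiE I A) x \<partial>PiM I (\<lambda>_. M))"
      by (rule emeasure_density) (auto intro!: sets_PiM_I_finite fin)
    also have "\<dots> = (\<integral>\<^sup>+ x. (\<Prod>i\<in>I. g i (x i) * indicator (A i) (x i)) \<partial>PiM I (\<lambda>_. M))"
      by (intro nn_integral_cong prod_indicator_PiE fin) (simp add: space_PiM PiE_def)
    also have "\<dots> = (\<Prod>i\<in>I. \<integral>\<^sup>+ y. g i y * indicator (A i) y \<partial>M)"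
      by (rule MM.product_nn_integral_prod[OF fin]) auto
    also have "\<dots> = (\<Prod>i\<in>I. emeasure (density M (g i)) (A i))"
      by (intro prod.cong refl emeasure_density[symmetric]) auto
    finally show "emeasure (density (PiM I (\<lambda>_. M)) (\<lambda>x. \<Prod>i\<in>I. g i (x i))) (PiE I A) = (\<Prod>i\<in>I. emeasure (density M (g i)) (A i))" .
  qed
qed




locale posterior_step = density_pair M p q + geometric_prior \<theta>
  for M :: "'x measure" and p q :: "'x \<Rightarrow> real" and \<theta> :: real +
  fixes K :: nat and h :: "'x history"
  assumes history_within: "history_within K h" and history_nonneg: "history_nonneg p q h"
    and mdens_pos: "mdens \<theta> K p q h > 0"
begin

lemma mdens_nonzero: "mdens \<theta> K p q h \<noteq> 0"
  using mdens_pos by simp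

lemmas pred_change_bounds_h = pred_change_bounds[OF history_within history_nonneg mdens_nonzero]

lemma prob_space_mix_measure_pred_change:
  "k \<in> {1..K} \<Longrightarrow> prob_space (mix_measure (pred_change \<theta> p q h k))"
  by (intro prob_space_mix_measure pred_change_bounds_h)

lemma nonneg_on_space_PiM:
  "x' \<in> space (PiM C (\<lambda>_. M)) \<Longrightarrow> \<forall>k\<in>C. p (x' k) \<ge> 0 \<and> q (x' k) \<ge> 0"
  using p_nonneg q_nonneg by (auto simp: space_PiM)

lemma pred_eq_PiM_mix_measure:
  assumes C: "C \<subseteq> {1..K}"
  shows "pred \<theta> K M p q h C = PiM C (\<lambda>k. mix_measure (pred_change \<theta> p q h k))"
proof -
  let ?mix = "\<lambda>k x. mix_dens p q (pred_change \<theta> p q h k) x"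
  have "pred \<theta> K M p q h C = density (PiM C (\<lambda>_. M)) (\<lambda>x'. \<Prod>k\<in>C. ennreal (?mix k (x' k)))"
    unfolding pred_def
  proof (rule density_cong_space)
    fix x' assume x': "x' \<in> space (PiM C (\<lambda>_. M))"
    have "mdens \<theta> K p q (h @ [(C, x')]) / mdens \<theta> K p q h = (\<Prod>k\<in>C. ?mix k (x' k))"
      using mdens_snoc[OF history_within history_nonneg mdens_nonzero C nonneg_on_space_PiM[OF x']]
        mdens_nonzero by simp
    moreover have "(\<Prod>k\<in>C. ennreal (?mix k (x' k))) = ennreal (\<Prod>k\<in>C. ?mix k (x' k))"
      using C x' pred_change_bounds_h by (intro prod_ennreal mix_dens_nonneg) (auto simp: space_PiM)
    ultimately show "ennreal (mdens \<theta> K p q (h @ [(C, x')]) / mdens \<theta> K p q h)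
        = (\<Prod>k\<in>C. ennreal (?mix k (x' k)))"
      by simp
  qed
  also have "\<dots> = PiM C (\<lambda>k. mix_measure (pred_change \<theta> p q h k))"
    unfolding mix_measure_def using C prob_space_mix_measure_pred_change
    by (intro density_PiM_prod sigma_finite finite_subset[OF C finite_atLeastAtMost]) (auto simp: mix_measure_def)
  finally show ?thesis .
qed

text \<open>Off the null set where the new marginal density vanishes, the updated posteriors are the
  Bayes updates of the new observations; clamping makes the right-hand side a measurable
  function of \<open>x'\<close> everywhere.\<close>

lemma sorted_posteriors_eq:
  assumes C: "C \<subseteq> {1..K}" and x': "x' \<in> space (PiM C (\<lambda>_. M))"
  shows "sort (map (Wpost \<theta> K p q (h @ [(C, x')])) (sorted_list_of_set C))
    = sorted_clamped C (\<lambda>k\<in>C. if (\<Prod>j\<in>C. mix_dens p q (pred_change \<theta> p q h j) (x' j)) = 0 then 0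
        else post_change p q (pred_change \<theta> p q h k) (x' k))"
proof -
  have "Wpost \<theta> K p q (h @ [(C, x')]) k = clamp01 (if (\<Prod>j\<in>C. mix_dens p q (pred_change \<theta> p q h j) (x' j)) = 0
      then 0 else post_change p q (pred_change \<theta> p q h k) (x' k))" if k: "k \<in> C" for k
  proof -
    have "x' k \<in> space M" using x' k by (auto simp: space_PiM)
    then have "0 \<le> post_change p q (pred_change \<theta> p q h k) (x' k)"
      "post_change p q (pred_change \<theta> p q h k) (x' k) \<le> 1"
      using post_change_bounds pred_change_bounds_h k C by blast+
    then show ?thesis
      using mdens_snoc[OF history_within history_nonneg mdens_nonzero C nonneg_on_space_PiM[OF x']]
        Wpost_snoc[OF history_within history_nonneg mdens_nonzero C nonneg_on_space_PiM[OF x'] k]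
        mdens_nonzero by (simp add: clamp01_id)
  qed
  then show ?thesis
    unfolding sorted_clamped_def using finite_subset[OF C finite_atLeastAtMost] by (intro arg_cong[where f = sort] map_cong) auto
qed

lemma AE_mix_dens_nonzero:
  assumes C: "C \<subseteq> {1..K}"
  shows "AE x' in PiM C (\<lambda>k. mix_measure (pred_change \<theta> p q h k)).
    \<forall>j\<in>C. mix_dens p q (pred_change \<theta> p q h j) (x' j) \<noteq> 0"
proof (rule AE_finite_allI[OF finite_subset[OF C finite_atLeastAtMost]])
  fix j assume j: "j \<in> C"
  have "AE y in mix_measure (pred_change \<theta> p q h j). mix_dens p q (pred_change \<theta> p q h j) y \<noteq> 0"
    unfolding mix_measure_def by (subst AE_density) (auto intro!: AE_I2)
  then show "AE x' in PiM C (\<lambda>k. mix_measure (pred_change \<theta> p q h k)).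
      mix_dens p q (pred_change \<theta> p q h j) (x' j) \<noteq> 0"
    using C j by (intro AE_PiM_component prob_space_mix_measure_pred_change) auto
qed

lemma sets_PiM_mix_measure:
  "sets (PiM C (\<lambda>k. mix_measure (pred_change \<theta> p q h k))) = sets (PiM C (\<lambda>_. M))"
  by (rule sets_PiM_cong) (auto simp: mix_measure_def)

lemma distr_PiM_post_change:
  assumes C: "C \<subseteq> {1..K}"
  shows "distr (PiM C (\<lambda>k. mix_measure (pred_change \<theta> p q h k))) (PiM C (\<lambda>_. borel))
      (\<lambda>x'. \<lambda>k\<in>C. post_change p q (pred_change \<theta> p q h k) (x' k))
    = PiM C (\<lambda>k. post_law (pred_change \<theta> p q h k))"
  unfolding post_law_def using C
  by (intro distr_PiM_componentwise finite_subset[OF C finite_atLeastAtMost] prob_space_mix_measure_pred_change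
      post_change_measurable_mix) auto

lemma next_posteriors_law:
  assumes C: "C \<subseteq> {1..K}"
  shows "distr (pred \<theta> K M p q h C) (Mo K) (\<lambda>x'. sort (map (Wpost \<theta> K p q (h @ [(C, x')])) (sorted_list_of_set C)))
    = distr (PiM C (\<lambda>k. post_law (pred_change \<theta> p q h k))) (Mo K) (sorted_clamped C)"
proof -
  have fC: "finite C" using C finite_subset by blast
  have cC: "card C \<le> K" using card_mono[OF _ C] by simp
  let ?N = "PiM C (\<lambda>k. mix_measure (pred_change \<theta> p q h k))"
  let ?\<Phi> = "\<lambda>x'. sort (map (Wpost \<theta> K p q (h @ [(C, x')])) (sorted_list_of_set C))"
  let ?Pr = "\<lambda>x'. \<Prod>j\<in>C. mix_dens p q (pred_change \<theta> p q h j) (x' j)"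
  define V where "V x' = (\<lambda>k\<in>C. if ?Pr x' = 0 then 0 else post_change p q (pred_change \<theta> p q h k) (x' k))" for x'
  define G where "G x' = (\<lambda>k\<in>C. post_change p q (pred_change \<theta> p q h k) (x' k))" for x'
  have space_N: "space ?N = space (PiM C (\<lambda>_. M))" by (rule sets_eq_imp_space_eq[OF sets_PiM_mix_measure])
  have V_meas: "V \<in> measurable ?N (PiM C (\<lambda>_. borel))" and G_meas: "G \<in> measurable ?N (PiM C (\<lambda>_. borel))"
    unfolding measurable_cong_sets[OF sets_PiM_mix_measure refl] V_def G_def using fC by measurable
  have \<Phi>_eq: "?\<Phi> x' = sorted_clamped C (V x')" if "x' \<in> space ?N" for x'
    using sorted_posteriors_eq[OF C] that unfolding space_N V_def by simp
  have \<Phi>_meas: "?\<Phi> \<in> measurable ?N (Mo K)"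
    using measurable_comp[OF V_meas sorted_clamped_measurable[OF fC cC]]
    by (subst measurable_cong[OF \<Phi>_eq]) (simp_all add: comp_def)
  have G'_meas: "(\<lambda>x'. sorted_clamped C (G x')) \<in> measurable ?N (Mo K)"
    using measurable_comp[OF G_meas sorted_clamped_measurable[OF fC cC]] by (simp add: comp_def)
  have "AE x' in ?N. ?\<Phi> x' = sorted_clamped C (G x')"
    using AE_mix_dens_nonzero[OF C]
  proof (rule AE_mp, intro AE_I2 impI)
    fix x' assume x': "x' \<in> space ?N" and "\<forall>j\<in>C. mix_dens p q (pred_change \<theta> p q h j) (x' j) \<noteq> 0"
    then have "?Pr x' \<noteq> 0" using fC by simp
    then show "?\<Phi> x' = sorted_clamped C (G x')" using \<Phi>_eq[OF x'] by (simp add: V_def G_def)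
  qed
  then have "distr ?N (Mo K) ?\<Phi> = distr ?N (Mo K) (\<lambda>x'. sorted_clamped C (G x'))"
    by (rule distr_cong_AE[OF refl refl _ \<Phi>_meas G'_meas])
  also have "\<dots> = distr (distr ?N (PiM C (\<lambda>_. borel)) G) (Mo K) (sorted_clamped C)"
    by (subst distr_distr[OF sorted_clamped_measurable[OF fC cC] G_meas]) (simp add: comp_def)
  finally show ?thesis
    unfolding pred_eq_PiM_mix_measure[OF C] G_def distr_PiM_post_change[OF C] .
qed

lemma next_posteriors_coupling:
  assumes B: "B \<subseteq> {1..K}" and C: "C \<subseteq> {1..K}" and inj: "inj_on \<phi> B" and im: "\<phi> ` B \<subseteq> C"
    and le: "\<And>b. b \<in> B \<Longrightarrow> Wpost \<theta> K p q h (\<phi> b) \<le> Wpost \<theta> K p q h b"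
  shows "\<exists>\<nu>. prob_space \<nu> \<and> sets \<nu> = sets (Mo K \<Otimes>\<^sub>M Mo K) \<and>
      distr \<nu> (Mo K) fst = distr (pred \<theta> K M p q h C) (Mo K)
        (\<lambda>x'. sort (map (Wpost \<theta> K p q (h @ [(C, x')])) (sorted_list_of_set C))) \<and>
      distr \<nu> (Mo K) snd = distr (pred \<theta> K M p q h B) (Mo K)
        (\<lambda>x'. sort (map (Wpost \<theta> K p q (h @ [(B, x')])) (sorted_list_of_set B))) \<and>
      (AE z in \<nu>. preceq (fst z) (snd z))"
  unfolding next_posteriors_law[OF B] next_posteriors_law[OF C]
proof (rule quantile_coupling[OF finite_subset[OF B finite_atLeastAtMost] finite_subset[OF C finite_atLeastAtMost] _ _ inj im])
  show "card B \<le> K" "card C \<le> K" using card_mono[OF _ B] card_mono[OF _ C] by simp_all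
  show "real_distribution (post_law (pred_change \<theta> p q h k))" if "k \<in> B \<union> C" for k
    using that B C by (intro real_distribution_post_law pred_change_bounds_h) auto
  fix b x assume b: "b \<in> B"
  then have "\<phi> b \<in> {1..K}" "b \<in> {1..K}" using im C B by blast+
  then show "cdf (post_law (pred_change \<theta> p q h b)) x \<le> cdf (post_law (pred_change \<theta> p q h (\<phi> b))) x"
    using le[OF b] by (intro cdf_post_law_antimono pred_change_bounds_h
        pred_change_mono[OF history_within history_nonneg mdens_nonzero])
qed

lemma onestep_coupling:
  assumes BS: "B \<subseteq> S" and SK: "S \<subseteq> {1..K}" and "0 \<le> \<alpha>"
    and avg: "(\<Sum>k\<in>B. Wpost \<theta> K p q h k) / real (max (card B) 1) \<le> \<alpha>"
  defines "C \<equiv> onestep \<alpha> S (Wpost \<theta> K p q h)"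
  shows "\<exists>\<nu>. prob_space \<nu> \<and> sets \<nu> = sets (Mo K \<Otimes>\<^sub>M Mo K) \<and>
      distr \<nu> (Mo K) fst = distr (pred \<theta> K M p q h C) (Mo K)
        (\<lambda>x'. sort (map (Wpost \<theta> K p q (h @ [(C, x')])) (sorted_list_of_set C))) \<and>
      distr \<nu> (Mo K) snd = distr (pred \<theta> K M p q h B) (Mo K)
        (\<lambda>x'. sort (map (Wpost \<theta> K p q (h @ [(B, x')])) (sorted_list_of_set B))) \<and>
      (AE z in \<nu>. preceq (fst z) (snd z))"
proof -
  have fS: "finite S" using SK finite_subset by blast
  obtain \<phi> where "inj_on \<phi> B" "\<phi> ` B \<subseteq> C" "\<forall>b\<in>B. Wpost \<theta> K p q h (\<phi> b) \<le> Wpost \<theta> K p q h b"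
    using onestep_dominates[OF fS BS assms(3) avg] unfolding C_def by blast
  moreover have "C \<subseteq> {1..K}" using onestep_subset[OF fS] SK unfolding C_def by blast
  ultimately show ?thesis using BS SK by (intro next_posteriors_coupling) auto
qed

end


section \<open>Histories generated by a procedure\<close>


lemma consistent_take: "consistent K A h \<Longrightarrow> n \<le> length h \<Longrightarrow> consistent K A (take n h)"
  unfolding consistent_def by (auto simp: min_def)

lemma active_subset_last:
  "is_procedure K A \<Longrightarrow> consistent K A h \<Longrightarrow> h \<noteq> [] \<Longrightarrow> A h \<subseteq> fst (last h)"
  unfolding is_procedure_def by blast

lemma history_within_if_consistent:
  assumes P: "is_procedure K A" and c: "consistent K A h"
  shows "history_within K h"
  unfolding history_within_def
proof (intro allI impI)
  fix i assume "i < length h"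
  then show "fst (h ! i) \<subseteq> {1..K}"
  proof (induction i)
    case 0
    then show ?case using c unfolding consistent_def by auto
  next
    case (Suc i)
    have "fst (h ! Suc i) = A (take (Suc i) h)" using c Suc.prems unfolding consistent_def by auto
    also have "\<dots> \<subseteq> fst (last (take (Suc i) h))"
      using Suc.prems by (intro active_subset_last[OF P] consistent_take[OF c]) auto
    also have "last (take (Suc i) h) = h ! i"
      using Suc.prems by (subst last_conv_nth) (auto simp: min_def)
    finally show ?case using Suc by auto
  qed
qed

lemma history_nonneg_if_in_support:
  assumes "in_support \<theta> K M p q A h" "\<forall>x\<in>space M. p x \<ge> 0" "\<forall>x\<in>space M. q x \<ge> 0"
  shows "history_nonneg p q h"
  using assms unfolding history_nonneg_def in_support_def by (fastforce simp: PiE_def Pi_def)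

theorem propositionB1:
  fixes M :: "'x measure" and p q :: "'x \<Rightarrow> real" and \<theta> \<alpha> :: real
    and K t0 :: nat and A :: "'x history \<Rightarrow> nat set" and h :: "'x history"
  assumes "K \<ge> 1"
    and "0 < \<theta>" and "\<theta> < 1"
    and "sigma_finite_measure M"
    and "p \<in> borel_measurable M" and "q \<in> borel_measurable M"
    and "\<forall>x\<in>space M. p x \<ge> 0" and "\<forall>x\<in>space M. q x \<ge> 0"
    and "(\<integral>\<^sup>+x. ennreal (p x) \<partial>M) = 1" and "(\<integral>\<^sup>+x. ennreal (q x) \<partial>M) = 1"
    and "0 < \<alpha>" and "\<alpha> \<le> 1"
    and "T_alpha \<alpha> \<theta> K M p q A"
    and "t0 \<ge> 1" and "length h = t0"
    and "in_support \<theta> K M p q A h"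
  shows "\<exists>\<nu>. prob_space \<nu> \<and> sets \<nu> = sets (Mo K \<Otimes>\<^sub>M Mo K) \<and>
           distr \<nu> (Mo K) fst = next_law \<theta> K M p q (switch \<theta> K p q \<alpha> A t0) h \<and>
           distr \<nu> (Mo K) snd = next_law \<theta> K M p q (switch \<theta> K p q \<alpha> A (Suc t0)) h \<and>
           (AE z in \<nu>. preceq (fst z) (snd z))"
proof -
  have proc: "is_procedure K A" and cons: "consistent K A h" and "h \<noteq> []"
    using assms(13-16) by (auto simp: T_alpha_def in_support_def)
  have within: "history_within K h" by (rule history_within_if_consistent[OF proc cons])
  interpret posterior_step M p q \<theta> K h
  proof (intro posterior_step.intro density_pair.intro geometric_prior.intro posterior_step_axioms.intro)
    show "history_nonneg p q h" by (rule history_nonneg_if_in_support[OF assms(16,7,8)])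
    show "mdens \<theta> K p q h > 0" using assms(16) by (simp add: in_support_def)
  qed (use assms within in auto)
  define S where "S = fst (last h)"
  have AS: "A h \<subseteq> S" unfolding S_def by (rule active_subset_last[OF proc cons \<open>h \<noteq> []\<close>])
  have SK: "S \<subseteq> {1..K}" using within \<open>h \<noteq> []\<close> by (simp add: S_def history_within_def last_conv_nth)
  have avg: "(\<Sum>k\<in>A h. Wpost \<theta> K p q h k) / real (max (card (A h)) 1) \<le> \<alpha>"
    using assms(13-16) AS SK cexp_FNP_eq_average_Wpost[OF within history_nonneg, of "A h"]
    by (auto simp: T_alpha_def LFNR_def)
  have "switch \<theta> K p q \<alpha> A t0 h = onestep \<alpha> S (Wpost \<theta> K p q h)"
    and "switch \<theta> K p q \<alpha> A (Suc t0) h = A h"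
    using assms(15) by (simp_all add: switch_def S_def)
  then show ?thesis
    unfolding next_law_def using onestep_coupling[OF AS SK _ avg] assms(11) by simp
qed


end
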